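(* Let $(\mathcal{A},\mathbf{m})$ be a multiarrangement in $\mathbb{Q}^l$ with $\mathcal{A}=\{H_1,\dots,H_n\}$, $H_i=\alpha_i^{-1}(0)$, where the $\alpha_i\in\mathbb{Z}[x_1,\dots,x_l]$ are linear forms such that no prime number divides any $\alpha_i$. If $(\mathcal{A},\mathbf{m})$ is free in $\mathbb{Q}^l$ with exponents $(e_1,\dots,e_l)$, then for every sufficiently large prime $p$, the multiarrangement $(\mathcal{A}_p,\mathbf{m})$ is free in $\mathbb{F}_p^l$ with exponents $(e_1,\dots,e_l)$.
   Context: Let $\mathbb{K}$ be a field and $S=\mathbb{K}[x_1,\dots,x_l]$. A multiarrangement $(\mathcal{A},\mathbf{m})$ in $\mathbb{K}^l$ is a finite set $\mathcal{A}=\{H_1,\dots,H_n\}$ of distinct linear hyperplanes $H_i=\alpha_i^{-1}(0)$ together with $\mathbf{m}\colon\mathcal{A}\to\mathbb{Z}_{\ge0}$; $Q(\mathcal{A},\mathbf{m})=\prod_i\alpha_i^{\mathbf{m}(H_i)}$. $D(\mathcal{A},\mathbf{m})=\{\delta=\sum_j f_j\partial_{x_j}: f_j\in S,\ \delta(\alpha_i)\in\alpha_i^{\mathbf{m}(H_i)}S\ \forall i\}$. $(\mathcal{A},\mathbf{m})$ is free with exponents $(e_1,\dots,e_l)$ if $D(\mathcal{A},\mathbf{m})$ is a free $S$-module with a basis of homogeneous derivations (all coefficients homogeneous of the same degree) of polynomial degrees $e_1,\dots,e_l$. For a prime $p$, $\pi_p$ is reduction mod $p$ on $\mathbb{Z}[x_1,\dots,x_l]$;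 $p$ is good if $\pi_p(\alpha_i)\neq\pi_p(\alpha_j)$ for $i\ne j$ (all but finitely many primes are good). For good $p$, $(\mathcal{A}_p,\mathbf{m})$ is the multiarrangement in $\mathbb{F}_p^l$ with hyperplanes $\pi_p(\alpha_i)^{-1}(0)$ of multiplicity $\mathbf{m}(H_i)$. *)

theory Defs
  imports Complex_Main "HOL-Library.Poly_Mapping" "HOL-Computational_Algebra.Primes"
begin

(* Multivariate polynomials: finitely supported maps from monomials (exponent
   vectors nat =>0 nat, variable x_j <-> index j) to coefficients.
   S = K[x_0,...,x_{l-1}] consists of the polynomials using only variables < l. *)
type_synonym 'a mpoly = "(nat \<Rightarrow>\<^sub>0 nat) \<Rightarrow>\<^sub>0 'a"

definition in_vars :: "nat \<Rightarrow> 'a::zero mpoly \<Rightarrow> bool" where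
  "in_vars l P \<longleftrightarrow> (\<forall>mon \<in> Poly_Mapping.keys P. \<forall>v \<in> Poly_Mapping.keys mon. v < l)"

(* P is homogeneous of total degree d (the zero polynomial counts as homogeneous of every degree) *)
definition homog :: "nat \<Rightarrow> 'a::zero mpoly \<Rightarrow> bool" where
  "homog d P \<longleftrightarrow> (\<forall>mon \<in> Poly_Mapping.keys P. (\<Sum>v\<in>Poly_Mapping.keys mon. Poly_Mapping.lookup mon v) = d)"

definition const_poly :: "'a::zero \<Rightarrow> 'a mpoly" where
  "const_poly c = Poly_Mapping.single 0 c"

definition var_poly :: "nat \<Rightarrow> 'a::{zero,one} mpoly" where
  "var_poly j = Poly_Mapping.single (Poly_Mapping.single j 1) 1"

definition lin_form :: "nat \<Rightarrow> (nat \<Rightarrow> 'a::comm_ring_1) \<Rightarrow> 'a mpoly" where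
  "lin_form l a = (\<Sum>j<l. const_poly (a j) * var_poly j)"

(* A derivation  delta = sum_{j<l} f_j d/dx_j  is represented by its coefficient
   family f (f j = 0 for j >= l); polynomial coefficients lie in S. *)
definition is_der :: "nat \<Rightarrow> (nat \<Rightarrow> 'a::zero mpoly) \<Rightarrow> bool" where
  "is_der l f \<longleftrightarrow> (\<forall>j<l. in_vars l (f j)) \<and> (\<forall>j\<ge>l. f j = 0)"

definition der_app :: "nat \<Rightarrow> (nat \<Rightarrow> 'a::comm_ring_1 mpoly) \<Rightarrow> (nat \<Rightarrow> 'a) \<Rightarrow> 'a mpoly" where
  "der_app l f a = (\<Sum>j<l. const_poly (a j) * f j)"

(* Generic setting: coefficients in a commutative ring 'a, and the coefficient field
   K is 'a modulo the ideal described by the predicate z ("is zero in K[x]").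
   For K = Q: 'a = rat and z P <-> P = 0.
   For K = F_p: 'a = int and z P <-> all coefficients of P are divisible by p,
   i.e. K[x] = Z[x] / p Z[x].
   Arrangement: hyperplanes alpha_i = lin_form l (alpha i), i < n, with multiplicities m i. *)

definition D_mod :: "('a::comm_ring_1 mpoly \<Rightarrow> bool) \<Rightarrow> nat \<Rightarrow> nat \<Rightarrow> (nat \<Rightarrow> nat \<Rightarrow> 'a)
    \<Rightarrow> (nat \<Rightarrow> nat) \<Rightarrow> (nat \<Rightarrow> 'a mpoly) set" where
  "D_mod z l n alpha m = {f. is_der l f \<and>
      (\<forall>i<n. \<exists>g. in_vars l g \<and> z (der_app l f (alpha i) - lin_form l (alpha i) ^ m i * g))}"

definition free_mod :: "('a::comm_ring_1 mpoly \<Rightarrow> bool) \<Rightarrow> nat \<Rightarrow> nat \<Rightarrow> (nat \<Rightarrow> nat \<Rightarrow> 'a)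
    \<Rightarrow> (nat \<Rightarrow> nat) \<Rightarrow> (nat \<Rightarrow> nat) \<Rightarrow> bool" where
  "free_mod z l n alpha m e \<longleftrightarrow>
     (\<exists>theta :: nat \<Rightarrow> nat \<Rightarrow> 'a mpoly.
        (\<forall>k<l. theta k \<in> D_mod z l n alpha m \<and> (\<forall>j<l. homog (e k) (theta k j))) \<and>
        (\<forall>f \<in> D_mod z l n alpha m. \<exists>g. (\<forall>k<l. in_vars l (g k)) \<and>
            (\<forall>j<l. z (f j - (\<Sum>k<l. g k * theta k j)))) \<and>
        (\<forall>g. (\<forall>k<l. in_vars l (g k)) \<longrightarrow> (\<forall>j<l. z (\<Sum>k<l. g k * theta k j)) \<longrightarrow>
            (\<forall>k<l. z (g k))))"

definition free_multiarr :: "nat \<Rightarrow> nat \<Rightarrow> (nat \<Rightarrow> nat \<Rightarrow> 'k::field) \<Rightarrow> (nat \<Rightarrow> nat)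
    \<Rightarrow> (nat \<Rightarrow> nat) \<Rightarrow> bool" where
  "free_multiarr l n alpha m e = free_mod (\<lambda>P. P = 0) l n alpha m e"

definition zero_mod :: "nat \<Rightarrow> int mpoly \<Rightarrow> bool" where
  "zero_mod p P \<longleftrightarrow> (\<forall>mon. int p dvd Poly_Mapping.lookup P mon)"

definition free_multiarr_modp :: "nat \<Rightarrow> nat \<Rightarrow> nat \<Rightarrow> (nat \<Rightarrow> nat \<Rightarrow> int) \<Rightarrow> (nat \<Rightarrow> nat)
    \<Rightarrow> (nat \<Rightarrow> nat) \<Rightarrow> bool" where
  "free_multiarr_modp p l n alpha m e = free_mod (zero_mod p) l n alpha m e"

definition good_prime :: "nat \<Rightarrow> nat \<Rightarrow> nat \<Rightarrow> (nat \<Rightarrow> nat \<Rightarrow> int) \<Rightarrow> bool" where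
  "good_prime p l n alpha \<longleftrightarrow>
     (\<forall>i<n. \<forall>i'<n. i \<noteq> i' \<longrightarrow> (\<exists>j<l. \<not> int p dvd (alpha i j - alpha i' j)))"

end

theory Submission
  imports Defs
begin

(* Over Q, a homogeneous basis theta of D(A,m) and the matrix G with
   G theta = theta G = Q I (it exists because Q d/dx_j lies in D(A,m)) satisfy finitely many
   polynomial identities, among them the divisibility of theta_k(alpha_i) and of
   alpha_i(j') G_jk - alpha_i(j) G_j'k by alpha_i^(m_i).  Clearing denominators turns them into
   integer identities in which Q is replaced by c Q for some integer c <> 0.  Let p be a prime
   not dividing c for which the reductions of the alpha_i are pairwise non-proportional; this
   excludes only finitely many p, since otherwise a nonzero 2 x 2 minor would vanish mod p.
   Modulo p the theta_k lie in D(A_p,m) and stay independent, because theta G = c Q I with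
   c Q <> 0 in F_p[x].  They also generate: for f in D(A_p,m) every entry of f G is divisible
   by each alpha_i^(m_i), hence by Q, as the reductions of the alpha_i are pairwise coprime
   primes of F_p[x]; so c f = (f G / Q) theta, and c is invertible mod p. *)

section \<open>Polynomial arithmetic\<close>

lemma const_poly_mult: "const_poly a * const_poly b = const_poly (a * b)"
  by (simp add: const_poly_def mult_single)

lemma const_poly_diff: "const_poly a - const_poly b = const_poly (a - b)"
  by (simp add: const_poly_def single_diff)

lemma const_poly_zero [simp]: "const_poly 0 = 0"
  by (simp add: const_poly_def)

lemma const_poly_one [simp]: "const_poly 1 = 1"
  by (simp add: const_poly_def)

lemma lookup_const_poly_mult:
  "Poly_Mapping.lookup (const_poly c * P) mon = c * Poly_Mapping.lookup P mon"
proof -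
  have "const_poly c * P = Poly_Mapping.map ((*) c) P"
    by (simp add: const_poly_def mult_map_scale_conv_mult)
  then show ?thesis by (simp add: map.rep_eq when_def)
qed

lemma keys_const_poly_mult:
  "c \<noteq> 0 \<Longrightarrow> Poly_Mapping.keys (const_poly c * P) = Poly_Mapping.keys (P :: 'a::idom mpoly)"
  by (auto simp: in_keys_iff lookup_const_poly_mult)

lemma lookup_var_poly_mult:
  fixes P :: "'a::comm_ring_1 mpoly"
  shows "Poly_Mapping.lookup (var_poly j * P) mon =
    (if 0 < Poly_Mapping.lookup mon j
     then Poly_Mapping.lookup P (mon - Poly_Mapping.single j 1) else 0)"
proof -
  have shift: "mon = Poly_Mapping.single j 1 + q \<longleftrightarrow>
      0 < Poly_Mapping.lookup mon j \<and> q = mon - Poly_Mapping.single j 1" for q :: "nat \<Rightarrow>\<^sub>0 nat"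
    by (auto simp: lookup_add lookup_single lookup_minus when_def intro!: poly_mapping_eqI)
  have "Poly_Mapping.lookup (var_poly j * P) mon =
      (\<Sum>q. Poly_Mapping.lookup P q when mon = Poly_Mapping.single j 1 + q)"
    by (simp add: var_poly_def lookup_mult lookup_single when_mult)
  then show ?thesis
    by (simp only: shift) (simp add: when_def)
qed

lemma var_poly_power:
  "(var_poly v :: 'a::comm_ring_1 mpoly) ^ b = Poly_Mapping.single (Poly_Mapping.single v b) 1"
  by (induction b) (simp_all add: var_poly_def mult_single flip: single_add)

lemma mpoly_induct [case_names zero add const var]:
  fixes P :: "'a::comm_ring_1 mpoly"
  assumes zero: "\<Phi> 0" and add: "\<And>P Q. \<Phi> P \<Longrightarrow> \<Phi> Q \<Longrightarrow> \<Phi> (P + Q)"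
    and const_case: "\<And>c. \<Phi> (const_poly c)" and var: "\<And>j P. \<Phi> P \<Longrightarrow> \<Phi> (var_poly j * P)"
  shows "\<Phi> P"
proof -
  have update_eq: "Poly_Mapping.update a b f = f + Poly_Mapping.single a b"
    if "a \<notin> Poly_Mapping.keys f" for a b and f :: "'c \<Rightarrow>\<^sub>0 'd::monoid_add"
    using that
    by (intro poly_mapping_eqI) (auto simp: lookup_update lookup_add lookup_single when_def in_keys_iff)
  have var_power: "\<Phi> (var_poly v ^ b * X)" if "\<Phi> X" for v b X
    using that var[of "var_poly v ^ _ * X" v] by (induction b) (simp_all add: mult.assoc)
  have monomial: "\<Phi> (Poly_Mapping.single mon c)" for mon c
  proof (induction mon arbitrary: c rule: update_induct)
    case const
    then show ?case using const_case[of c] by (simp add: const_poly_def)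
  next
    case (update f v b)
    have "Poly_Mapping.single (Poly_Mapping.update v b f) c = var_poly v ^ b * Poly_Mapping.single f c"
      using update(1) by (simp add: update_eq var_poly_power mult_single add.commute)
    then show ?case using var_power[OF update(3)] by simp
  qed
  show ?thesis
  proof (induction P rule: update_induct)
    case const
    then show ?case using zero by simp
  next
    case (update f a b)
    then show ?case using add[OF update(3) monomial[of a b]] by (simp add: update_eq)
  qed
qed

lemma lookup_lin_form_mult:
  "Poly_Mapping.lookup (lin_form l b * S) mon =
    (\<Sum>j<l. b j * (if 0 < Poly_Mapping.lookup mon j
                   then Poly_Mapping.lookup S (mon - Poly_Mapping.single j 1) else 0))"
  unfolding lin_form_def sum_distrib_right lookup_sum
  by (simp only: mult.assoc lookup_const_poly_mult lookup_var_poly_mult)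

lemma lookup_lin_form_single:
  assumes "j < l"
  shows "Poly_Mapping.lookup (lin_form l a) (Poly_Mapping.single j 1) = a j"
proof -
  have "Poly_Mapping.single i (1::nat) = Poly_Mapping.single j 1 \<longleftrightarrow> i = j" for i
    by (metis lookup_single_eq lookup_single_not_eq zero_neq_one)
  then have "Poly_Mapping.lookup (lin_form l a) (Poly_Mapping.single j 1) = (\<Sum>i<l. if i = j then a j else 0)"
    unfolding lin_form_def lookup_sum lookup_const_poly_mult
    by (intro sum.cong) (auto simp: var_poly_def lookup_single when_def)
  then show ?thesis
    using assms by simp
qed

lemma lin_form_nonzero: "j < l \<Longrightarrow> a j \<noteq> 0 \<Longrightarrow> lin_form l a \<noteq> 0"
  using lookup_lin_form_single[of j l a] by auto

section \<open>Polynomials in the variables of S\<close>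

text \<open>\<open>restrict_vars l\<close> substitutes \<open>0\<close> for the variables \<open>x\<^sub>j\<close>, \<open>j \<ge> l\<close>; being an evaluation it is a
  ring homomorphism, and it projects onto the polynomials of \<open>S\<close>.\<close>

definition restrict_vars :: "nat \<Rightarrow> 'a::comm_ring_1 mpoly \<Rightarrow> 'a mpoly" where
  "restrict_vars l P =
     Poly_Mapping.mapp (\<lambda>mon c. if \<forall>v \<in> Poly_Mapping.keys mon. v < l then c else 0) P"

lemma lookup_restrict_vars:
  "Poly_Mapping.lookup (restrict_vars l P) mon =
     (if \<forall>v \<in> Poly_Mapping.keys mon. v < l then Poly_Mapping.lookup P mon else 0)"
  by (auto simp: restrict_vars_def lookup_mapp when_def in_keys_iff)

lemma restrict_vars_add: "restrict_vars l (P + Q) = restrict_vars l P + restrict_vars l Q"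
  by (rule poly_mapping_eqI) (simp add: lookup_restrict_vars lookup_add)

lemma restrict_vars_diff: "restrict_vars l (P - Q) = restrict_vars l P - restrict_vars l Q"
  by (rule poly_mapping_eqI) (simp add: lookup_restrict_vars lookup_minus)

lemma restrict_vars_zero [simp]: "restrict_vars l 0 = 0"
  by (rule poly_mapping_eqI) (simp add: lookup_restrict_vars)

lemma restrict_vars_const_poly [simp]: "restrict_vars l (const_poly c) = const_poly c"
  by (rule poly_mapping_eqI) (auto simp: lookup_restrict_vars const_poly_def lookup_single when_def)

lemma restrict_vars_one [simp]: "restrict_vars l 1 = 1"
  using restrict_vars_const_poly[of l 1] by simp

lemma restrict_vars_const_poly_mult:
  "restrict_vars l (const_poly c * P) = const_poly c * restrict_vars l P"
  by (rule poly_mapping_eqI) (simp add: lookup_restrict_vars lookup_const_poly_mult)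

lemma restrict_vars_var_poly:
  "restrict_vars l (var_poly j :: 'a::comm_ring_1 mpoly) = (if j < l then var_poly j else 0)"
  by (rule poly_mapping_eqI) (auto simp: lookup_restrict_vars var_poly_def lookup_single when_def)

lemma restrict_vars_var_poly_mult:
  "restrict_vars l (var_poly j * P) = restrict_vars l (var_poly j) * restrict_vars l P"
proof (rule poly_mapping_eqI)
  fix mon :: "nat \<Rightarrow>\<^sub>0 nat"
  have keys_shift: "(\<forall>v \<in> Poly_Mapping.keys (mon - Poly_Mapping.single j (Suc 0)). v < l) \<longleftrightarrow>
      (\<forall>v \<in> Poly_Mapping.keys mon. v < l)" if "j < l" "0 < Poly_Mapping.lookup mon j"
    using that by (auto simp: in_keys_iff lookup_minus lookup_single when_def split: if_splits)
  show "Poly_Mapping.lookup (restrict_vars l (var_poly j * P)) mon =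
      Poly_Mapping.lookup (restrict_vars l (var_poly j) * restrict_vars l P) mon"
    by (cases "j < l")
      (auto simp: lookup_restrict_vars restrict_vars_var_poly lookup_var_poly_mult keys_shift in_keys_iff)
qed

lemma restrict_vars_mult: "restrict_vars l (P * Q) = restrict_vars l P * restrict_vars l Q"
proof (induction P rule: mpoly_induct)
  case (add P1 P2)
  then show ?case by (simp add: distrib_right restrict_vars_add)
next
  case (const c)
  then show ?case by (simp add: restrict_vars_const_poly_mult)
next
  case (var j P)
  have "restrict_vars l (var_poly j * P * Q) = restrict_vars l (var_poly j * (P * Q))"
    by (simp only: mult.assoc)
  then show ?case by (simp only: restrict_vars_var_poly_mult var mult.assoc)
qed simp

lemma restrict_vars_sum: "restrict_vars l (\<Sum>i\<in>A. f i) = (\<Sum>i\<in>A. restrict_vars l (f i))"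
  by (induction A rule: infinite_finite_induct) (simp_all add: restrict_vars_add)

lemma restrict_vars_prod: "restrict_vars l (\<Prod>i\<in>A. f i) = (\<Prod>i\<in>A. restrict_vars l (f i))"
  by (induction A rule: infinite_finite_induct) (simp_all add: restrict_vars_mult)

lemma restrict_vars_power: "restrict_vars l (P ^ k) = restrict_vars l P ^ k"
  by (induction k) (simp_all add: restrict_vars_mult)

lemma in_vars_iff_restrict_vars: "in_vars l P \<longleftrightarrow> restrict_vars l P = P"
  unfolding in_vars_def poly_mapping_eq_iff fun_eq_iff lookup_restrict_vars
  by (metis in_keys_iff)

lemma in_vars_restrict_vars: "in_vars l (restrict_vars l P)"
  by (auto simp: in_vars_def in_keys_iff lookup_restrict_vars split: if_splits)

lemma in_vars_zero [simp]: "in_vars l 0"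
  by (simp add: in_vars_def)

lemma in_vars_const_poly [simp]: "in_vars l (const_poly c :: 'a::comm_ring_1 mpoly)"
  by (simp add: in_vars_iff_restrict_vars)

lemma in_vars_diff: "in_vars l (P::'a::comm_ring_1 mpoly) \<Longrightarrow> in_vars l Q \<Longrightarrow> in_vars l (P - Q)"
  by (simp add: in_vars_iff_restrict_vars restrict_vars_diff)

lemma in_vars_mult: "in_vars l (P::'a::comm_ring_1 mpoly) \<Longrightarrow> in_vars l Q \<Longrightarrow> in_vars l (P * Q)"
  by (simp add: in_vars_iff_restrict_vars restrict_vars_mult)

lemma in_vars_sum: "(\<And>i. i \<in> A \<Longrightarrow> in_vars l (f i :: 'a::comm_ring_1 mpoly)) \<Longrightarrow> in_vars l (\<Sum>i\<in>A. f i)"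
  by (simp add: in_vars_iff_restrict_vars restrict_vars_sum)

lemma in_vars_prod: "(\<And>i. i \<in> A \<Longrightarrow> in_vars l (f i :: 'a::comm_ring_1 mpoly)) \<Longrightarrow> in_vars l (\<Prod>i\<in>A. f i)"
  by (simp add: in_vars_iff_restrict_vars restrict_vars_prod)

lemma in_vars_power: "in_vars l (P::'a::comm_ring_1 mpoly) \<Longrightarrow> in_vars l (P ^ k)"
  by (simp add: in_vars_iff_restrict_vars restrict_vars_power)

lemma in_vars_lin_form: "in_vars l (lin_form l a)"
  by (simp add: in_vars_iff_restrict_vars lin_form_def restrict_vars_sum restrict_vars_mult
      restrict_vars_var_poly)

lemma restrict_vars_der_app: "is_der l f \<Longrightarrow> restrict_vars l (der_app l f a) = der_app l f a"
  by (simp add: der_app_def restrict_vars_sum restrict_vars_mult is_der_def in_vars_iff_restrict_vars)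

lemma mem_D_mod_if_dvd:
  assumes "is_der l f" "\<forall>i<n. lin_form l (alpha i) ^ m i dvd der_app l f (alpha i)" "z 0"
  shows "f \<in> D_mod z l n alpha m"
proof -
  have "\<exists>g. in_vars l g \<and> z (der_app l f (alpha i) - lin_form l (alpha i) ^ m i * g)" if "i < n" for i
  proof -
    obtain g where g: "der_app l f (alpha i) = lin_form l (alpha i) ^ m i * g"
      using assms(2) \<open>i < n\<close> by (auto elim: dvdE)
    then have "restrict_vars l (der_app l f (alpha i)) =
        restrict_vars l (lin_form l (alpha i)) ^ m i * restrict_vars l g"
      by (simp add: restrict_vars_mult restrict_vars_power)
    then have "der_app l f (alpha i) = lin_form l (alpha i) ^ m i * restrict_vars l g"
      using assms(1) in_vars_lin_form[of l "alpha i"]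
      by (simp add: restrict_vars_der_app in_vars_iff_restrict_vars)
    then show ?thesis
      using assms(3) by (intro exI[of _ "restrict_vars l g"]) (simp add: in_vars_restrict_vars)
  qed
  then show ?thesis
    using assms(1) by (simp add: D_mod_def)
qed

lemma mem_D_mod_eq_0_iff:
  "f \<in> D_mod (\<lambda>P. P = 0) l n alpha m \<longleftrightarrow>
     is_der l f \<and> (\<forall>i<n. lin_form l (alpha i) ^ m i dvd der_app l f (alpha i))"
    (is "_ \<longleftrightarrow> ?dvd")
proof
  assume ?dvd
  then show "f \<in> D_mod (\<lambda>P. P = 0) l n alpha m"
    by (intro mem_D_mod_if_dvd) simp_all
qed (auto simp: D_mod_def)

section \<open>Integer and rational polynomials\<close>

definition mpoly_of_int :: "int mpoly \<Rightarrow> 'a::comm_ring_1 mpoly" where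
  "mpoly_of_int = Poly_Mapping.map of_int"

lemma lookup_mpoly_of_int: "Poly_Mapping.lookup (mpoly_of_int P) mon = of_int (Poly_Mapping.lookup P mon)"
  by (simp add: mpoly_of_int_def map.rep_eq when_def)

lemma mpoly_of_int_add: "mpoly_of_int (P + Q) = mpoly_of_int P + mpoly_of_int Q"
  by (rule poly_mapping_eqI) (simp add: lookup_mpoly_of_int lookup_add)

lemma mpoly_of_int_diff: "mpoly_of_int (P - Q) = mpoly_of_int P - mpoly_of_int Q"
  by (rule poly_mapping_eqI) (simp add: lookup_mpoly_of_int lookup_minus)

lemma mpoly_of_int_zero [simp]: "mpoly_of_int 0 = 0"
  by (rule poly_mapping_eqI) (simp add: lookup_mpoly_of_int)

lemma mpoly_of_int_const_poly: "mpoly_of_int (const_poly c) = const_poly (of_int c)"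
  by (rule poly_mapping_eqI)
    (simp add: lookup_mpoly_of_int const_poly_def lookup_single when_def del: single_of_int)

lemma mpoly_of_int_one [simp]: "mpoly_of_int 1 = 1"
  using mpoly_of_int_const_poly[of 1] by simp

lemma mpoly_of_int_var_poly: "mpoly_of_int (var_poly j) = var_poly j"
  by (rule poly_mapping_eqI) (simp add: lookup_mpoly_of_int var_poly_def lookup_single when_def)

lemma mpoly_of_int_mult: "mpoly_of_int (P * Q) = mpoly_of_int P * mpoly_of_int Q"
proof (induction P rule: mpoly_induct)
  case (add P1 P2)
  then show ?case by (simp add: distrib_right mpoly_of_int_add)
next
  case (const c)
  show ?case
    by (rule poly_mapping_eqI) (simp add: lookup_mpoly_of_int lookup_const_poly_mult mpoly_of_int_const_poly)
next
  case (var j P)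
  have var_mult: "mpoly_of_int (var_poly j * R) = var_poly j * mpoly_of_int R" for R
    by (rule poly_mapping_eqI) (simp add: lookup_mpoly_of_int lookup_var_poly_mult)
  have "mpoly_of_int (var_poly j * P * Q) = mpoly_of_int (var_poly j * (P * Q))"
    by (simp only: mult.assoc)
  then show ?case by (simp only: var_mult var mult.assoc)
qed simp

lemma mpoly_of_int_sum: "mpoly_of_int (\<Sum>i\<in>A. f i) = (\<Sum>i\<in>A. mpoly_of_int (f i))"
  by (induction A rule: infinite_finite_induct) (simp_all add: mpoly_of_int_add)

lemma mpoly_of_int_prod: "mpoly_of_int (\<Prod>i\<in>A. f i) = (\<Prod>i\<in>A. mpoly_of_int (f i))"
  by (induction A rule: infinite_finite_induct) (simp_all add: mpoly_of_int_mult)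

lemma mpoly_of_int_power: "mpoly_of_int (P ^ k) = mpoly_of_int P ^ k"
  by (induction k) (simp_all add: mpoly_of_int_mult)

lemma mpoly_of_int_lin_form: "mpoly_of_int (lin_form l a) = lin_form l (\<lambda>j. of_int (a j))"
  by (simp add: lin_form_def mpoly_of_int_sum mpoly_of_int_mult mpoly_of_int_const_poly
      mpoly_of_int_var_poly)

lemma mpoly_of_int_eq_iff [simp]:
  "(mpoly_of_int P :: 'a::{comm_ring_1,ring_char_0} mpoly) = mpoly_of_int Q \<longleftrightarrow> P = Q"
  by (auto simp: poly_mapping_eq_iff fun_eq_iff lookup_mpoly_of_int)

lemma keys_mpoly_of_int [simp]:
  "Poly_Mapping.keys (mpoly_of_int P :: 'a::{comm_ring_1,ring_char_0} mpoly) = Poly_Mapping.keys P"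
  by (auto simp: in_keys_iff lookup_mpoly_of_int)

lemma dvd_if_mpoly_of_int_dvd:
  fixes y w :: "'a::{comm_ring_1,ring_char_0} mpoly"
  assumes "mpoly_of_int Y = const_poly (of_int d) * y" "mpoly_of_int W = const_poly (of_int d) * w"
    and "y = mpoly_of_int A * w"
  shows "A dvd Y"
proof -
  have "mpoly_of_int Y = (mpoly_of_int (A * W) :: 'a mpoly)"
    using assms by (simp add: mpoly_of_int_mult ac_simps)
  then show ?thesis
    by simp
qed

lemma common_denominator:
  fixes F :: "rat mpoly set"
  assumes "finite F"
  obtains d :: int and lift :: "rat mpoly \<Rightarrow> int mpoly"
  where "d > 0" "\<And>P. P \<in> F \<Longrightarrow> mpoly_of_int (lift P) = const_poly (of_int d) * P"
proof
  define C where "C = (\<Union>P\<in>F. Poly_Mapping.range P)"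
  define d where "d = (\<Prod>c\<in>C. snd (quotient_of c))"
  have "finite C"
    using assms by (simp add: C_def)
  show "d > 0"
    unfolding d_def by (rule prod_pos) (metis prod.collapse quotient_of_denom_pos)
  have integral: "of_int d * c \<in> \<int>" if "c \<in> C" for c
  proof -
    obtain a b where ab: "quotient_of c = (a, b)" by fastforce
    then have "of_int b * c \<in> \<int>"
      using quotient_of_denom_pos quotient_of_div by fastforce
    moreover have "d = (\<Prod>c'\<in>C - {c}. snd (quotient_of c')) * b"
      unfolding d_def using \<open>finite C\<close> that ab by (simp add: prod.remove)
    ultimately show ?thesis
      by (simp add: mult.assoc) (blast intro: Ints_mult Ints_prod Ints_of_int)
  qed
  fix P assume "P \<in> F"
  show "mpoly_of_int (Poly_Mapping.map (\<lambda>c. \<lfloor>of_int d * c\<rfloor>) P) = const_poly (of_int d) * P"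
  proof (rule poly_mapping_eqI)
    fix mon
    have "Poly_Mapping.lookup P mon \<noteq> 0 \<Longrightarrow> Poly_Mapping.lookup P mon \<in> C"
      using \<open>P \<in> F\<close> by (auto simp: C_def in_keys_iff intro!: bexI[of _ P] in_keys_lookup_in_range)
    then show "Poly_Mapping.lookup (mpoly_of_int (Poly_Mapping.map (\<lambda>c. \<lfloor>of_int d * c\<rfloor>) P)) mon =
        Poly_Mapping.lookup (const_poly (of_int d) * P) mon"
      using integral by (auto simp: lookup_mpoly_of_int lookup_const_poly_mult map.rep_eq when_def)
  qed
qed

section \<open>Divisibility modulo a prime element\<close>

text \<open>Divisibility and primality in the quotient ring \<open>R/(\<pi>)\<close>, expressed in \<open>R\<close> itself.\<close>

definition dvd_mod :: "'a::comm_ring_1 \<Rightarrow> 'a \<Rightarrow> 'a \<Rightarrow> bool" where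
  "dvd_mod \<pi> a b \<longleftrightarrow> (\<exists>s. \<pi> dvd b - a * s)"

definition prime_mod :: "'a::comm_ring_1 \<Rightarrow> 'a \<Rightarrow> bool" where
  "prime_mod \<pi> a \<longleftrightarrow> \<not> \<pi> dvd a \<and> \<not> dvd_mod \<pi> a 1 \<and>
     (\<forall>x y. dvd_mod \<pi> a (x * y) \<longrightarrow> dvd_mod \<pi> a x \<or> dvd_mod \<pi> a y)"

lemma dvd_modI: "\<pi> dvd b - a * s \<Longrightarrow> dvd_mod \<pi> a b"
  unfolding dvd_mod_def by blast

lemma dvd_modE:
  assumes "dvd_mod \<pi> a b"
  obtains s where "\<pi> dvd b - a * s"
  using assms unfolding dvd_mod_def by blast

lemma dvd_mod_cancel_unit:
  assumes unit: "\<pi> dvd c * c' - 1" and "dvd_mod \<pi> a (c * b)"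
  shows "dvd_mod \<pi> a b"
proof -
  obtain s where s: "\<pi> dvd c * b - a * s"
    using assms(2) by (rule dvd_modE)
  have "b - a * (c' * s) = c' * (c * b - a * s) - (c * c' - 1) * b"
    by (simp add: algebra_simps)
  also have "\<pi> dvd \<dots>"
    using s unit by (blast intro: dvd_diff dvd_mult dvd_mult2)
  finally show ?thesis by (rule dvd_modI)
qed

lemma prime_elem_not_dvd_prod:
  assumes "prime_elem \<pi>" "\<And>i. i \<in> I \<Longrightarrow> \<not> \<pi> dvd f i"
  shows "\<not> \<pi> dvd (\<Prod>i\<in>I. f i)"
  using assms(2)
proof (induction I rule: infinite_finite_induct)
  case (insert i I)
  then show ?case
    using assms(1) by (simp add: prime_elem_dvd_mult_iff)
qed (use assms(1) prime_elem_not_unit in auto)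

lemma prime_mod_power_base:
  assumes "prime_mod \<pi> a" "dvd_mod \<pi> a (b ^ k)"
  shows "dvd_mod \<pi> a b"
  using assms(2)
proof (induction k)
  case 0
  then show ?case using assms(1) by (simp add: prime_mod_def)
next
  case (Suc k)
  then show ?case using assms(1) unfolding prime_mod_def by (metis power_Suc)
qed

lemma prime_mod_prod:
  assumes "prime_mod \<pi> a" "\<And>i. i \<in> I \<Longrightarrow> \<not> dvd_mod \<pi> a (f i)"
  shows "\<not> dvd_mod \<pi> a (\<Prod>i\<in>I. f i)"
  using assms(2)
proof (induction I rule: infinite_finite_induct)
  case (insert i I)
  then show ?case using assms(1) unfolding prime_mod_def by (metis insertCI prod.insert)
qed (use assms(1) in \<open>simp_all add: prime_mod_def\<close>)

lemma dvd_mod_power_cancel: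
  assumes \<pi>: "prime_elem \<pi>" and a: "prime_mod \<pi> a" and b: "\<not> dvd_mod \<pi> a b"
  shows "dvd_mod \<pi> (a ^ k) (b * w) \<Longrightarrow> dvd_mod \<pi> (a ^ k) w"
proof (induction k arbitrary: w)
  case 0
  show ?case by (rule dvd_modI[of _ _ _ w]) simp
next
  case (Suc k)
  obtain s where s: "\<pi> dvd b * w - a ^ Suc k * s"
    using Suc.prems by (rule dvd_modE)
  have "dvd_mod \<pi> a (b * w)"
    using s by (intro dvd_modI[of _ _ _ "a ^ k * s"]) (simp add: mult.assoc)
  then have "dvd_mod \<pi> a w"
    using a b unfolding prime_mod_def by blast
  then obtain w' where w': "\<pi> dvd w - a * w'"
    by (rule dvd_modE)
  have "a * (b * w' - a ^ k * s) = (b * w - a ^ Suc k * s) - b * (w - a * w')"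
    by (simp add: algebra_simps)
  also have "\<pi> dvd \<dots>"
    using s w' by (blast intro: dvd_diff dvd_mult)
  finally have "\<pi> dvd a * (b * w' - a ^ k * s)" .
  moreover have "\<not> \<pi> dvd a"
    using a by (simp add: prime_mod_def)
  ultimately have "\<pi> dvd b * w' - a ^ k * s"
    using prime_elem_dvd_multD[OF \<pi>] by blast
  then have "dvd_mod \<pi> (a ^ k) w'"
    by (rule Suc.IH[OF dvd_modI])
  then obtain s' where s': "\<pi> dvd w' - a ^ k * s'"
    by (rule dvd_modE)
  have "w - a ^ Suc k * s' = (w - a * w') + a * (w' - a ^ k * s')"
    by (simp add: algebra_simps)
  also have "\<pi> dvd \<dots>"
    using w' s' by (blast intro: dvd_add dvd_mult)
  finally show ?case by (rule dvd_modI)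
qed

lemma dvd_mod_prod_powers:
  assumes \<pi>: "prime_elem \<pi>" and "finite I"
    and prime: "\<And>i. i \<in> I \<Longrightarrow> prime_mod \<pi> (a i)"
    and coprime: "\<And>i j. i \<in> I \<Longrightarrow> j \<in> I \<Longrightarrow> i \<noteq> j \<Longrightarrow> \<not> dvd_mod \<pi> (a i) (a j)"
    and dvd: "\<And>i. i \<in> I \<Longrightarrow> dvd_mod \<pi> (a i ^ m i) u"
  shows "dvd_mod \<pi> (\<Prod>i\<in>I. a i ^ m i) u"
proof -
  have "dvd_mod \<pi> (\<Prod>i\<in>J. a i ^ m i) u" if "J \<subseteq> I" for J
    using finite_subset[OF that \<open>finite I\<close>] that
  proof (induction J rule: finite_induct)
    case empty
    show ?case by (rule dvd_modI[of _ _ _ u]) simp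
  next
    case (insert t J)
    let ?P = "\<Prod>i\<in>J. a i ^ m i"
    have t: "t \<in> I" and J: "J \<subseteq> I"
      using insert.prems by auto
    obtain w where w: "\<pi> dvd u - ?P * w"
      using insert.IH[OF J] by (rule dvd_modE)
    obtain s where s: "\<pi> dvd u - a t ^ m t * s"
      using dvd[OF t] by (rule dvd_modE)
    have "?P * w - a t ^ m t * s = (u - a t ^ m t * s) - (u - ?P * w)"
      by simp
    also have "\<pi> dvd \<dots>"
      using s w by (rule dvd_diff)
    finally have "dvd_mod \<pi> (a t ^ m t) (?P * w)"
      by (rule dvd_modI)
    moreover have "\<not> dvd_mod \<pi> (a t) ?P"
    proof (rule prime_mod_prod[OF prime[OF t]])
      fix i assume "i \<in> J"
      then have "\<not> dvd_mod \<pi> (a t) (a i)"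
        using coprime[OF t] J insert.hyps(2) by blast
      then show "\<not> dvd_mod \<pi> (a t) (a i ^ m i)"
        using prime_mod_power_base[OF prime[OF t]] by blast
    qed
    ultimately have "dvd_mod \<pi> (a t ^ m t) w"
      using dvd_mod_power_cancel[OF \<pi> prime[OF t]] by blast
    then obtain w' where w': "\<pi> dvd w - a t ^ m t * w'"
      by (rule dvd_modE)
    have "u - (\<Prod>i\<in>insert t J. a i ^ m i) * w' = (u - ?P * w) + ?P * (w - a t ^ m t * w')"
      using insert.hyps by (simp add: algebra_simps)
    also have "\<pi> dvd \<dots>"
      using w w' by (blast intro: dvd_add dvd_mult)
    finally show ?case by (rule dvd_modI)
  qed
  then show ?thesis by blast
qed

section \<open>Integer polynomials modulo a prime\<close>

lemma const_poly_dvd_iff: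
  "const_poly c dvd (P :: int mpoly) \<longleftrightarrow> (\<forall>mon. c dvd Poly_Mapping.lookup P mon)"
proof
  assume "\<forall>mon. c dvd Poly_Mapping.lookup P mon"
  then have "P = const_poly c * Poly_Mapping.map (\<lambda>x. x div c) P"
    by (intro poly_mapping_eqI) (simp add: lookup_const_poly_mult map.rep_eq when_def)
  then show "const_poly c dvd P" ..
qed (auto simp: lookup_const_poly_mult)

lemma zero_mod_iff_dvd: "zero_mod p P \<longleftrightarrow> const_poly (int p) dvd P"
  by (simp add: zero_mod_def const_poly_dvd_iff)

lemma const_poly_dvd_const_poly_iff: "const_poly c dvd (const_poly d :: int mpoly) \<longleftrightarrow> c dvd d"
proof
  assume "const_poly c dvd const_poly d"
  from this[unfolded const_poly_dvd_iff, rule_format, of 0] show "c dvd d"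
    by (simp add: const_poly_def)
next
  assume "c dvd d"
  then show "const_poly c dvd const_poly d"
    by (metis const_poly_mult dvd_def)
qed

lemma const_poly_dvd_restrict_vars: "const_poly c dvd P \<Longrightarrow> const_poly c dvd restrict_vars l P"
  by (auto simp: restrict_vars_const_poly_mult elim!: dvdE)

lemma inverse_mod_prime:
  assumes "prime p" "\<not> int p dvd c"
  obtains c' where "const_poly (int p) dvd const_poly c * const_poly c' - 1"
proof -
  have "prime (int p)"
    using assms(1) by simp
  then have "coprime (int p) c"
    using assms(2) by (rule prime_imp_coprime)
  then have "gcd c (int p) = 1"
    by (simp add: coprime_commute)
  then obtain u v where "u * c + v * int p = 1"
    using bezout_int[of c "int p"] by auto
  then have "c * u - 1 = int p * (- v)"
    by algebra
  then have "int p dvd c * u - 1"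
    by simp
  then have "const_poly (int p) dvd const_poly c * const_poly u - const_poly 1"
    by (simp only: const_poly_mult const_poly_diff const_poly_dvd_const_poly_iff)
  then show ?thesis
    using that by simp
qed

lemma lookup_mult_Max_keys:
  fixes f g :: "('a::{ordered_cancel_comm_monoid_add, linorder}) \<Rightarrow>\<^sub>0 ('b::comm_semiring_1)"
  assumes "f \<noteq> 0" "g \<noteq> 0"
  shows "Poly_Mapping.lookup (f * g) (Max (Poly_Mapping.keys f) + Max (Poly_Mapping.keys g)) =
    Poly_Mapping.lookup f (Max (Poly_Mapping.keys f)) * Poly_Mapping.lookup g (Max (Poly_Mapping.keys g))"
proof -
  define F where "F = Poly_Mapping.keys f"
  define G where "G = Poly_Mapping.keys g"
  have [simp]: "finite F" "finite G" "F \<noteq> {}" "G \<noteq> {}"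
    using assms by (simp_all add: F_def G_def)
  have outside: "a \<notin> F \<Longrightarrow> Poly_Mapping.lookup f a = 0" "b \<notin> G \<Longrightarrow> Poly_Mapping.lookup g b = 0"
    for a b by (simp_all add: F_def G_def in_keys_iff)
  have only_Max: "a = Max F \<and> b = Max G" if "a \<in> F" "b \<in> G" "a + b = Max F + Max G" for a b
  proof -
    have "a \<le> Max F" "b \<le> Max G"
      using that by simp_all
    then show ?thesis
      using that(3) add_strict_mono[of a "Max F" b "Max G"] add_less_le_mono[of a "Max F" b "Max G"]
        add_le_less_mono[of a "Max F" b "Max G"]
      by (metis order_le_neq_trans order_less_irrefl)
  qed
  have "Poly_Mapping.lookup (f * g) (Max F + Max G) =
      (\<Sum>(a, b). Poly_Mapping.lookup f a * Poly_Mapping.lookup g b when Max F + Max G = a + b)"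
    by (simp add: times_poly_mapping.rep_eq prod_fun_unfold_prod)
  also have "\<dots> = (\<Sum>ab. (case ab of (a, b) \<Rightarrow> Poly_Mapping.lookup f a * Poly_Mapping.lookup g b)
      when (Max F, Max G) = ab)"
  proof (rule Sum_any.cong)
    fix ab :: "'a \<times> 'a"
    obtain a b where ab: "ab = (a, b)"
      by fastforce
    have "Poly_Mapping.lookup f a * Poly_Mapping.lookup g b = 0"
      if "Max F + Max G = a + b" "(Max F, Max G) \<noteq> (a, b)"
      using that only_Max[of a b] outside by (cases "a \<in> F \<and> b \<in> G") auto
    then show "(case ab of (a, b) \<Rightarrow> Poly_Mapping.lookup f a * Poly_Mapping.lookup g b when Max F + Max G = a + b) =
        ((case ab of (a, b) \<Rightarrow> Poly_Mapping.lookup f a * Poly_Mapping.lookup g b) when (Max F, Max G) = ab)"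
      by (auto simp: ab when_def)
  qed
  also have "\<dots> = Poly_Mapping.lookup f (Max F) * Poly_Mapping.lookup g (Max G)"
    by simp
  finally show ?thesis by (simp add: F_def G_def)
qed

lemma prime_elem_const_poly:
  assumes p: "prime p"
  shows "prime_elem (const_poly (int p) :: int mpoly)"
proof (rule prime_elemI)
  let ?\<pi> = "const_poly (int p) :: int mpoly"
  show "?\<pi> \<noteq> 0"
    using p by (auto simp: const_poly_def)
  show "\<not> ?\<pi> dvd 1"
    using prime_gt_1_nat[OF p] const_poly_dvd_const_poly_iff[of "int p" 1] by simp
  fix A B :: "int mpoly"
  assume AB: "?\<pi> dvd A * B"
  (* Discarding the coefficients divisible by p leaves a representative whose nonzero
     coefficients are units mod p; the leading coefficient of a product of two such
     representatives is then not divisible by p either. *)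
  define reduce where "reduce P = Poly_Mapping.map (\<lambda>c. if int p dvd c then 0 else c) P"
    for P :: "int mpoly"
  have lookup_reduce: "Poly_Mapping.lookup (reduce P) mon =
      (if int p dvd Poly_Mapping.lookup P mon then 0 else Poly_Mapping.lookup P mon)" for P mon
    by (simp add: reduce_def map.rep_eq when_def)
  have reduce_diff: "?\<pi> dvd P - reduce P" for P
    by (auto simp: const_poly_dvd_iff lookup_minus lookup_reduce)
  have reduce_eq_0: "reduce P = 0 \<longleftrightarrow> ?\<pi> dvd P" for P
    by (auto simp: const_poly_dvd_iff poly_mapping_eq_iff fun_eq_iff lookup_reduce)
  have unit_coeff: "\<not> int p dvd Poly_Mapping.lookup (reduce P) (Max (Poly_Mapping.keys (reduce P)))"
    if "reduce P \<noteq> 0" for P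
  proof -
    have "Max (Poly_Mapping.keys (reduce P)) \<in> Poly_Mapping.keys (reduce P)"
      using that by simp
    then show ?thesis
      by (auto simp: in_keys_iff lookup_reduce split: if_splits)
  qed
  show "?\<pi> dvd A \<or> ?\<pi> dvd B"
  proof (rule ccontr)
    assume "\<not> (?\<pi> dvd A \<or> ?\<pi> dvd B)"
    then have A: "reduce A \<noteq> 0" and B: "reduce B \<noteq> 0"
      by (simp_all add: reduce_eq_0)
    have "reduce A * reduce B = A * B - A * (B - reduce B) - (A - reduce A) * reduce B"
      by (simp add: algebra_simps)
    also have "?\<pi> dvd \<dots>"
      by (rule dvd_diff[OF dvd_diff[OF AB dvd_mult[OF reduce_diff]] dvd_mult2[OF reduce_diff]])
    finally have "int p dvd Poly_Mapping.lookup (reduce A * reduce B)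
        (Max (Poly_Mapping.keys (reduce A)) + Max (Poly_Mapping.keys (reduce B)))"
      by (simp add: const_poly_dvd_iff)
    then show False
      using unit_coeff[OF A] unit_coeff[OF B] prime_dvd_mult_iff[of "int p"] p
      by (simp add: lookup_mult_Max_keys[OF A B])
  qed
qed

section \<open>Linear forms modulo a prime\<close>

definition avoids_var :: "nat \<Rightarrow> 'a::zero mpoly \<Rightarrow> bool" where
  "avoids_var j P \<longleftrightarrow> (\<forall>mon \<in> Poly_Mapping.keys P. Poly_Mapping.lookup mon j = 0)"

lemma avoids_var_zero [simp]: "avoids_var j 0"
  by (simp add: avoids_var_def)

lemma avoids_var_add: "avoids_var j P \<Longrightarrow> avoids_var j Q \<Longrightarrow> avoids_var j (P + Q)"
  unfolding avoids_var_def using keys_add[of P Q] by blast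

lemma avoids_var_uminus [simp]: "avoids_var j (- P) \<longleftrightarrow> avoids_var j P"
  by (simp add: avoids_var_def)

lemma avoids_var_mult:
  "avoids_var j (P :: 'a::comm_ring_1 mpoly) \<Longrightarrow> avoids_var j Q \<Longrightarrow> avoids_var j (P * Q)"
  unfolding avoids_var_def using keys_mult[of P Q] by (fastforce simp: lookup_add)

lemma avoids_var_const_poly [simp]: "avoids_var j (const_poly c)"
  by (simp add: avoids_var_def const_poly_def)

lemma avoids_var_var_poly: "i \<noteq> j \<Longrightarrow> avoids_var j (var_poly i :: 'a::comm_ring_1 mpoly)"
  by (simp add: avoids_var_def var_poly_def lookup_single)

lemma avoids_var_sum:
  "(\<And>i. i \<in> A \<Longrightarrow> avoids_var j (f i :: 'a::comm_ring_1 mpoly)) \<Longrightarrow> avoids_var j (\<Sum>i\<in>A. f i)"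
  by (induction A rule: infinite_finite_induct) (auto intro: avoids_var_add)

text \<open>Let the coefficient of \<open>x\<^sub>j\<^sub>j\<close> in the linear form \<open>b\<close> be a unit mod \<open>p\<close>. Modulo \<open>p\<close>, every
  polynomial is then a multiple of \<open>b\<close> plus a polynomial free of \<open>x\<^sub>j\<^sub>j\<close>, and the remainder is
  unique; this makes \<open>b\<close> prime modulo \<open>p\<close>.\<close>

lemma var_poly_mod_lin_form:
  assumes p: "prime p" and jj: "jj < l" and unit: "\<not> int p dvd b jj"
  obtains s R where "avoids_var jj R" "const_poly (int p) dvd var_poly j - lin_form l b * s - R"
proof (cases "j = jj")
  case True
  obtain c where c: "const_poly (int p) dvd const_poly (b jj) * const_poly c - 1"
    using inverse_mod_prime[OF p unit] by blast
  define T where "T = (\<Sum>i\<in>{..<l} - {jj}. const_poly (b i) * var_poly i)"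
  have "lin_form l b = const_poly (b jj) * var_poly jj + T"
    using jj by (simp add: lin_form_def T_def sum.remove)
  then have "var_poly jj - lin_form l b * const_poly c - - (const_poly c * T) =
      - ((const_poly (b jj) * const_poly c - 1) * var_poly jj)"
    by (simp add: algebra_simps)
  then have "const_poly (int p) dvd var_poly jj - lin_form l b * const_poly c - - (const_poly c * T)"
    using c by simp
  moreover have "avoids_var jj (- (const_poly c * T))"
    unfolding T_def by (auto intro!: avoids_var_mult avoids_var_sum avoids_var_var_poly)
  ultimately show ?thesis
    using that True by blast
next
  case False
  then show ?thesis
    using that[of "var_poly j" 0] by (simp add: avoids_var_var_poly)
qed

lemma lin_form_division:
  assumes p: "prime p" and jj: "jj < l" and unit: "\<not> int p dvd b jj"
  obtains S R where "avoids_var jj R" "const_poly (int p) dvd P - lin_form l b * S - R"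
proof -
  let ?\<pi> = "const_poly (int p) :: int mpoly"
  have "\<exists>S R. avoids_var jj R \<and> ?\<pi> dvd P - lin_form l b * S - R"
  proof (induction P rule: mpoly_induct)
    case zero
    show ?case by (intro exI[of _ 0]) simp
  next
    case (add P Q)
    then obtain S R S' R' where "avoids_var jj R" "?\<pi> dvd P - lin_form l b * S - R"
      and "avoids_var jj R'" "?\<pi> dvd Q - lin_form l b * S' - R'"
      by blast
    moreover have "P + Q - lin_form l b * (S + S') - (R + R') =
        (P - lin_form l b * S - R) + (Q - lin_form l b * S' - R')"
      by (simp add: algebra_simps)
    ultimately show ?case
      by (metis avoids_var_add dvd_add)
  next
    case (const c)
    show ?case by (intro exI[of _ 0] exI[of _ "const_poly c"]) simp
  next
    case (var j P)
    then obtain S R where R: "avoids_var jj R" and PR: "?\<pi> dvd P - lin_form l b * S - R"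
      by blast
    obtain s L where L: "avoids_var jj L" and jL: "?\<pi> dvd var_poly j - lin_form l b * s - L"
      using var_poly_mod_lin_form[where b = b, OF p jj unit] .
    have "var_poly j * P - lin_form l b * (var_poly j * S + s * R) - L * R =
        var_poly j * (P - lin_form l b * S - R) + (var_poly j - lin_form l b * s - L) * R"
      by (simp add: algebra_simps)
    also have "?\<pi> dvd \<dots>"
      using PR jL by (blast intro: dvd_add dvd_mult dvd_mult2)
    finally show ?case
      using avoids_var_mult[OF L R] by blast
  qed
  then show ?thesis
    using that by blast
qed

lemma exists_top_unit_coefficient:
  assumes "\<not> const_poly (int p) dvd S"
  obtains top where "\<not> int p dvd Poly_Mapping.lookup S top"
    and "\<And>mon. Poly_Mapping.lookup top j < Poly_Mapping.lookup mon j \<Longrightarrow> int p dvd Poly_Mapping.lookup S mon"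
proof -
  define K where "K = {mon \<in> Poly_Mapping.keys S. \<not> int p dvd Poly_Mapping.lookup S mon}"
  have "finite K"
    by (simp add: K_def)
  have "K \<noteq> {}"
    using assms by (auto simp: K_def const_poly_dvd_iff in_keys_iff) (metis dvd_0_right)
  then have "Max ((\<lambda>mon. Poly_Mapping.lookup mon j) ` K) \<in> (\<lambda>mon. Poly_Mapping.lookup mon j) ` K"
    using \<open>finite K\<close> by (intro Max_in) auto
  then obtain top where top: "top \<in> K"
    and top_max: "Poly_Mapping.lookup top j = Max ((\<lambda>mon. Poly_Mapping.lookup mon j) ` K)"
    by auto
  have "int p dvd Poly_Mapping.lookup S mon" if "Poly_Mapping.lookup top j < Poly_Mapping.lookup mon j" for mon
  proof (rule ccontr)
    assume "\<not> int p dvd Poly_Mapping.lookup S mon"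
    then have "mon \<in> K"
      by (auto simp: K_def in_keys_iff)
    then have "Poly_Mapping.lookup mon j \<le> Poly_Mapping.lookup top j"
      unfolding top_max using \<open>finite K\<close> by (intro Max_ge) auto
    then show False
      using that by simp
  qed
  moreover have "\<not> int p dvd Poly_Mapping.lookup S top"
    using top by (simp add: K_def)
  ultimately show ?thesis
    using that by blast
qed

lemma lin_form_division_unique:
  assumes p: "prime p" and jj: "jj < l" and unit: "\<not> int p dvd b jj"
    and R: "avoids_var jj R" and dvd: "const_poly (int p) dvd R - lin_form l b * S"
  shows "const_poly (int p) dvd S"
proof (rule ccontr)
  assume "\<not> const_poly (int p) dvd S"
  (* The coefficient of x_jj * top in lin_form l b * S is b jj times a unit plus multiples of p,
     while R has no such monomial. *)
  then obtain top where top: "\<not> int p dvd Poly_Mapping.lookup S top"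
    and above_top: "\<And>mon. Poly_Mapping.lookup top jj < Poly_Mapping.lookup mon jj \<Longrightarrow>
      int p dvd Poly_Mapping.lookup S mon"
    using exists_top_unit_coefficient[where j = jj] by blast
  define mon where "mon = top + Poly_Mapping.single jj 1"
  have mon_jj: "Poly_Mapping.lookup mon jj = Poly_Mapping.lookup top jj + 1"
    by (simp add: mon_def lookup_add)
  define t where "t j = b j * (if 0 < Poly_Mapping.lookup mon j
      then Poly_Mapping.lookup S (mon - Poly_Mapping.single j 1) else 0)" for j
  have "mon - Poly_Mapping.single jj 1 = top"
    by (rule poly_mapping_eqI) (simp add: mon_def lookup_add lookup_minus)
  then have "t jj = b jj * Poly_Mapping.lookup S top"
    by (simp add: t_def mon_jj)
  moreover have "int p dvd t j" if "j \<noteq> jj" for j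
    using that above_top[of "mon - Poly_Mapping.single j 1"]
    by (simp add: t_def lookup_minus mon_jj lookup_single)
  ultimately have sum_t: "int p dvd (\<Sum>j<l. t j) - b jj * Poly_Mapping.lookup S top"
    using jj by (simp add: sum.remove) (rule dvd_sum, simp)
  have "mon \<notin> Poly_Mapping.keys R"
    using R mon_jj by (auto simp: avoids_var_def)
  then have "Poly_Mapping.lookup R mon = 0"
    by (simp add: in_keys_iff)
  then have "int p dvd (\<Sum>j<l. t j)"
    using dvd[unfolded const_poly_dvd_iff, rule_format, of mon]
    by (simp add: lookup_minus lookup_lin_form_mult t_def)
  from dvd_diff[OF this sum_t] have "int p dvd b jj * Poly_Mapping.lookup S top"
    by simp
  moreover have "prime (int p)"
    using p by simp
  ultimately show False
    using unit top by (simp add: prime_dvd_mult_iff)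
qed

lemma lin_form_dvd_mod_mult:
  assumes p: "prime p" and jj: "jj < l" and unit: "\<not> int p dvd b jj"
    and "dvd_mod (const_poly (int p)) (lin_form l b) (A * B)"
  shows "dvd_mod (const_poly (int p)) (lin_form l b) A \<or> dvd_mod (const_poly (int p)) (lin_form l b) B"
proof -
  let ?\<pi> = "const_poly (int p) :: int mpoly" and ?b = "lin_form l b"
  obtain T where T: "?\<pi> dvd A * B - ?b * T"
    using assms(4) by (rule dvd_modE)
  obtain S R where R: "avoids_var jj R" and AR: "?\<pi> dvd A - ?b * S - R"
    using lin_form_division[where b = b, OF p jj unit] .
  obtain S' R' where R': "avoids_var jj R'" and BR': "?\<pi> dvd B - ?b * S' - R'"
    using lin_form_division[where b = b, OF p jj unit] .
  define X where "X = T - S * B - R * S'"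
  have "R * R' - ?b * X = (A * B - ?b * T) - R * (B - ?b * S' - R') - (A - ?b * S - R) * B"
    by (simp add: X_def algebra_simps)
  also have "?\<pi> dvd \<dots>"
    using T AR BR' by (blast intro: dvd_diff dvd_mult dvd_mult2)
  finally have RR': "?\<pi> dvd R * R' - ?b * X" .
  have "?\<pi> dvd X"
    using lin_form_division_unique[where b = b, OF p jj unit avoids_var_mult[OF R R'] RR'] .
  then have "?\<pi> dvd R * R'"
    using dvd_add[OF RR' dvd_mult[of _ X ?b]] by simp
  then have "?\<pi> dvd R \<or> ?\<pi> dvd R'"
    using prime_elem_const_poly[OF p] by (simp add: prime_elem_dvd_mult_iff)
  then show ?thesis
  proof
    assume "?\<pi> dvd R"
    then have "?\<pi> dvd A - ?b * S"
      using dvd_add[OF AR] by fastforce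
    then show ?thesis
      by (blast intro: dvd_modI)
  next
    assume "?\<pi> dvd R'"
    then have "?\<pi> dvd B - ?b * S'"
      using dvd_add[OF BR'] by fastforce
    then show ?thesis
      by (blast intro: dvd_modI)
  qed
qed

lemma prime_mod_lin_form:
  assumes p: "prime p" and jj: "jj < l" and unit: "\<not> int p dvd b jj"
  shows "prime_mod (const_poly (int p)) (lin_form l b)"
  unfolding prime_mod_def
proof (intro conjI)
  let ?\<pi> = "const_poly (int p) :: int mpoly" and ?b = "lin_form l b"
  show "\<not> ?\<pi> dvd ?b"
  proof
    assume "?\<pi> dvd ?b"
    then have "int p dvd Poly_Mapping.lookup ?b (Poly_Mapping.single jj 1)"
      unfolding const_poly_dvd_iff ..
    then show False
      using unit lookup_lin_form_single[OF jj, of b] by simp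
  qed
  show "\<not> dvd_mod ?\<pi> ?b 1"
  proof
    assume "dvd_mod ?\<pi> ?b 1"
    then obtain s where "?\<pi> dvd 1 - ?b * s"
      by (rule dvd_modE)
    then have "int p dvd Poly_Mapping.lookup (1 - ?b * s) 0"
      by (simp add: const_poly_dvd_iff)
    then show False
      using p by (simp add: lookup_minus lookup_lin_form_mult)
  qed
  show "\<forall>x y. dvd_mod ?\<pi> ?b (x * y) \<longrightarrow> dvd_mod ?\<pi> ?b x \<or> dvd_mod ?\<pi> ?b y"
    using lin_form_dvd_mod_mult[where b = b, OF p jj unit] by blast
qed

definition proportional_mod :: "nat \<Rightarrow> nat \<Rightarrow> (nat \<Rightarrow> int) \<Rightarrow> (nat \<Rightarrow> int) \<Rightarrow> bool" where
  "proportional_mod p l a b \<longleftrightarrow> (\<exists>c. \<forall>j<l. int p dvd a j - c * b j)"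

lemma proportional_mod_if_dvd_mod_lin_form:
  assumes "dvd_mod (const_poly (int p)) (lin_form l b) (lin_form l a)"
  shows "proportional_mod p l a b"
proof -
  obtain s where s: "const_poly (int p) dvd lin_form l a - lin_form l b * s"
    using assms by (rule dvd_modE)
  have "int p dvd a j - Poly_Mapping.lookup s 0 * b j" if "j < l" for j
  proof -
    have "Poly_Mapping.lookup (lin_form l b * s) (Poly_Mapping.single j 1) =
        (\<Sum>i<l. if i = j then b j * Poly_Mapping.lookup s 0 else 0)"
      unfolding lookup_lin_form_mult by (rule sum.cong) (auto simp: lookup_single when_def)
    then show ?thesis
      using s[unfolded const_poly_dvd_iff, rule_format, of "Poly_Mapping.single j 1"]
        lookup_lin_form_single[OF that, of a]
      using that by (simp add: lookup_minus mult.commute)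
  qed
  then show ?thesis
    unfolding proportional_mod_def by blast
qed

section \<open>Basis certificates\<close>

definition defining_poly :: "nat \<Rightarrow> nat \<Rightarrow> (nat \<Rightarrow> nat \<Rightarrow> 'a::comm_ring_1) \<Rightarrow> (nat \<Rightarrow> nat) \<Rightarrow> 'a mpoly" where
  "defining_poly l n alpha m = (\<Prod>i<n. lin_form l (alpha i) ^ m i)"

lemma in_vars_defining_poly: "in_vars l (defining_poly l n alpha m)"
  unfolding defining_poly_def by (intro in_vars_prod in_vars_power in_vars_lin_form)

lemma mpoly_of_int_defining_poly:
  "mpoly_of_int (defining_poly l n alpha m) = defining_poly l n (\<lambda>i j. of_int (alpha i j)) m"
  by (simp add: defining_poly_def mpoly_of_int_prod mpoly_of_int_power mpoly_of_int_lin_form)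

definition cofactor_poly :: "nat \<Rightarrow> nat \<Rightarrow> (nat \<Rightarrow> nat \<Rightarrow> 'a::comm_ring_1) \<Rightarrow> (nat \<Rightarrow> nat) \<Rightarrow> nat \<Rightarrow> 'a mpoly"
  where "cofactor_poly l n alpha m i = (\<Prod>i'\<in>{..<n} - {i}. lin_form l (alpha i') ^ m i')"

lemma defining_poly_eq_cofactor_poly:
  "i < n \<Longrightarrow> defining_poly l n alpha m = lin_form l (alpha i) ^ m i * cofactor_poly l n alpha m i"
  by (simp add: defining_poly_def cofactor_poly_def prod.remove)

lemma lin_form_power_dvd_cofactor_poly:
  "i' < n \<Longrightarrow> i' \<noteq> i \<Longrightarrow> lin_form l (alpha i') ^ m i' dvd cofactor_poly l n alpha m i"
  unfolding cofactor_poly_def by (rule dvd_prodI) auto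

lemma in_vars_cofactor_poly: "in_vars l (cofactor_poly l n alpha m i)"
  unfolding cofactor_poly_def by (intro in_vars_prod in_vars_power in_vars_lin_form)

lemma cofactor_poly_nonzero:
  fixes alpha :: "nat \<Rightarrow> nat \<Rightarrow> 'a::idom"
  assumes "\<forall>i<n. \<exists>j<l. alpha i j \<noteq> 0"
  shows "cofactor_poly l n alpha m i \<noteq> 0"
proof -
  have "lin_form l (alpha i') \<noteq> 0" if "i' < n" for i'
    using assms that lin_form_nonzero by blast
  then show ?thesis
    unfolding cofactor_poly_def by (simp add: prod_zero_iff)
qed

text \<open>Row \<open>k\<close> of \<open>\<theta>\<close> holds the coefficients of a derivation \<open>\<theta>\<^sub>k\<close>, and \<open>G = c Q \<theta>\<^sup>-\<^sup>1\<close>.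
  Over a field, with \<open>c = 1\<close>, a basis of a free \<open>D(\<A>, m)\<close> yields such a pair. All conditions
  are polynomial identities, so they survive clearing denominators and reduction mod \<open>p\<close>. The
  last one holds because \<open>\<alpha>\<^sub>i(\<partial>\<^sub>j') \<partial>\<^sub>j - \<alpha>\<^sub>i(\<partial>\<^sub>j) \<partial>\<^sub>j'\<close>, multiplied by the product of the
  other factors of \<open>Q\<close>, lies in \<open>D(\<A>, m)\<close>.\<close>

definition basis_certificate :: "nat \<Rightarrow> nat \<Rightarrow> (nat \<Rightarrow> nat \<Rightarrow> 'a::comm_ring_1) \<Rightarrow> (nat \<Rightarrow> nat) \<Rightarrow> (nat \<Rightarrow> nat)
    \<Rightarrow> 'a \<Rightarrow> (nat \<Rightarrow> nat \<Rightarrow> 'a mpoly) \<Rightarrow> (nat \<Rightarrow> nat \<Rightarrow> 'a mpoly) \<Rightarrow> bool" where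
  "basis_certificate l n alpha m e c \<theta> G \<longleftrightarrow>
     (\<forall>k<l. is_der l (\<theta> k) \<and> (\<forall>j<l. homog (e k) (\<theta> k j))) \<and>
     (\<forall>k<l. \<forall>i<n. lin_form l (alpha i) ^ m i dvd der_app l (\<theta> k) (alpha i)) \<and>
     (\<forall>j<l. \<forall>j'<l. (\<Sum>k<l. G j k * \<theta> k j') =
        (if j = j' then const_poly c * defining_poly l n alpha m else 0)) \<and>
     (\<forall>k<l. \<forall>k'<l. (\<Sum>j<l. \<theta> k j * G j k') =
        (if k = k' then const_poly c * defining_poly l n alpha m else 0)) \<and>
     (\<forall>i<n. \<forall>j<l. \<forall>j'<l. \<forall>k<l.
        lin_form l (alpha i) ^ m i dvd const_poly (alpha i j') * G j k - const_poly (alpha i j) * G j' k)"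

lemma sum_sum_mult_inverse:
  fixes A B :: "nat \<Rightarrow> nat \<Rightarrow> 'a::comm_semiring_1"
  assumes inverse: "\<forall>a<l. \<forall>c<l. (\<Sum>b<l. A a b * B b c) = (if a = c then Q else 0)" and "c < l"
  shows "(\<Sum>b<l. (\<Sum>a<l. x a * A a b) * B b c) = x c * Q"
proof -
  have "(\<Sum>b<l. (\<Sum>a<l. x a * A a b) * B b c) = (\<Sum>b<l. \<Sum>a<l. x a * (A a b * B b c))"
    by (simp add: sum_distrib_right mult.assoc)
  also have "\<dots> = (\<Sum>a<l. \<Sum>b<l. x a * (A a b * B b c))"
    by (rule sum.swap)
  also have "\<dots> = (\<Sum>a<l. x a * (\<Sum>b<l. A a b * B b c))"
    by (simp add: sum_distrib_left)
  also have "\<dots> = (\<Sum>a<l. if a = c then x c * Q else 0)"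
    using inverse \<open>c < l\<close> by (intro sum.cong) auto
  also have "\<dots> = x c * Q"
    using \<open>c < l\<close> by simp
  finally show ?thesis .
qed

lemma defining_poly_der_in_D_mod:
  assumes "j < l"
  shows "(\<lambda>j'. if j' = j then defining_poly l n alpha m else 0) \<in> D_mod (\<lambda>P. P = 0) l n alpha m"
  unfolding mem_D_mod_eq_0_iff
proof (intro conjI allI impI)
  show "is_der l (\<lambda>j'. if j' = j then defining_poly l n alpha m else 0)"
    using assms in_vars_defining_poly by (auto simp: is_der_def)
  fix i assume "i < n"
  have "der_app l (\<lambda>j'. if j' = j then defining_poly l n alpha m else 0) (alpha i) =
      (\<Sum>j'<l. if j' = j then const_poly (alpha i j) * defining_poly l n alpha m else 0)"
    unfolding der_app_def by (intro sum.cong) auto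
  also have "\<dots> = lin_form l (alpha i) ^ m i * (const_poly (alpha i j) * cofactor_poly l n alpha m i)"
    using assms by (simp add: defining_poly_eq_cofactor_poly[OF \<open>i < n\<close>] mult.left_commute)
  finally show "lin_form l (alpha i) ^ m i dvd
      der_app l (\<lambda>j'. if j' = j then defining_poly l n alpha m else 0) (alpha i)"
    by simp
qed

lemma cofactor_der_in_D_mod:
  assumes "i < n" "j < l" "j' < l"
  shows "(\<lambda>j''. cofactor_poly l n alpha m i *
      ((if j'' = j then const_poly (alpha i j') else 0) - (if j'' = j' then const_poly (alpha i j) else 0)))
    \<in> D_mod (\<lambda>P. P = 0) l n alpha m"
    (is "?\<phi> \<in> _")
  unfolding mem_D_mod_eq_0_iff
proof (intro conjI allI impI)
  let ?R = "cofactor_poly l n alpha m i"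
  have "in_vars l (?\<phi> j'')" for j''
    by (intro in_vars_mult in_vars_cofactor_poly in_vars_diff) simp_all
  then show "is_der l ?\<phi>"
    using assms by (simp add: is_der_def)
  fix i' assume "i' < n"
  have "der_app l ?\<phi> (alpha i') =
      (\<Sum>j''<l. (if j'' = j then ?R * (const_poly (alpha i' j) * const_poly (alpha i j')) else 0) -
        (if j'' = j' then ?R * (const_poly (alpha i' j') * const_poly (alpha i j)) else 0))"
    unfolding der_app_def by (intro sum.cong) (auto simp: algebra_simps)
  also have "\<dots> = ?R * (const_poly (alpha i' j) * const_poly (alpha i j') -
      const_poly (alpha i' j') * const_poly (alpha i j))"
    using assms by (simp add: sum_subtractf right_diff_distrib)
  finally have der: "der_app l ?\<phi> (alpha i') = \<dots>" .
  show "lin_form l (alpha i') ^ m i' dvd der_app l ?\<phi> (alpha i')"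
  proof (cases "i' = i")
    case True
    then show ?thesis
      using der by (simp add: mult.commute)
  next
    case False
    show ?thesis
      unfolding der by (rule dvd_mult2[OF lin_form_power_dvd_cofactor_poly[OF \<open>i' < n\<close> False]])
  qed
qed

lemma right_inverse_if_left_inverse:
  fixes \<theta> G :: "nat \<Rightarrow> nat \<Rightarrow> 'a::comm_ring_1 mpoly"
  assumes indep: "\<forall>g. (\<forall>k<l. in_vars l (g k)) \<longrightarrow> (\<forall>j<l. (\<Sum>k<l. g k * \<theta> k j) = 0) \<longrightarrow> (\<forall>k<l. g k = 0)"
    and vars: "\<forall>k<l. \<forall>j<l. in_vars l (\<theta> k j)" "\<forall>j<l. \<forall>k<l. in_vars l (G j k)" "in_vars l Q"
    and left: "\<forall>j<l. \<forall>j'<l. (\<Sum>k<l. G j k * \<theta> k j') = (if j = j' then Q else 0)"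
  shows "\<forall>k<l. \<forall>k'<l. (\<Sum>j<l. \<theta> k j * G j k') = (if k = k' then Q else 0)"
proof (intro allI impI)
  fix k k' assume "k < l" "k' < l"
  define g where "g k' = (\<Sum>j<l. \<theta> k j * G j k') - (if k = k' then Q else 0)" for k'
  have "in_vars l (g k')" if "k' < l" for k'
    using vars \<open>k < l\<close> that by (auto simp: g_def intro!: in_vars_diff in_vars_sum in_vars_mult)
  moreover have "(\<Sum>k'<l. g k' * \<theta> k' j) = 0" if "j < l" for j
  proof -
    have "(\<Sum>k'<l. (if k = k' then Q else 0) * \<theta> k' j) = (\<Sum>k'<l. if k = k' then \<theta> k j * Q else 0)"
      by (intro sum.cong) auto
    then have "(\<Sum>k'<l. (if k = k' then Q else 0) * \<theta> k' j) = \<theta> k j * Q"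
      using \<open>k < l\<close> by simp
    moreover have "(\<Sum>k'<l. (\<Sum>j'<l. \<theta> k j' * G j' k') * \<theta> k' j) = \<theta> k j * Q"
      by (rule sum_sum_mult_inverse[OF left that])
    ultimately show ?thesis
      by (simp add: g_def left_diff_distrib sum_subtractf)
  qed
  ultimately have "g k' = 0"
    using indep \<open>k' < l\<close> by blast
  then show "(\<Sum>j<l. \<theta> k j * G j k') = (if k = k' then Q else 0)"
    by (simp add: g_def)
qed

lemma adjoint_dvd_if_generating:
  fixes alpha :: "nat \<Rightarrow> nat \<Rightarrow> 'a::idom"
  assumes nonzero: "\<forall>i<n. \<exists>j<l. alpha i j \<noteq> 0"
    and gen: "\<forall>f\<in>D_mod (\<lambda>P. P = 0) l n alpha m.
      \<exists>g. (\<forall>k<l. in_vars l (g k)) \<and> (\<forall>j<l. f j - (\<Sum>k<l. g k * \<theta> k j) = 0)"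
    and right: "\<forall>k<l. \<forall>k'<l. (\<Sum>j<l. \<theta> k j * G j k') = (if k = k' then defining_poly l n alpha m else 0)"
    and "i < n" "j < l" "j' < l" "k < l"
  shows "lin_form l (alpha i) ^ m i dvd const_poly (alpha i j') * G j k - const_poly (alpha i j) * G j' k"
proof -
  let ?R = "cofactor_poly l n alpha m i"
  define \<phi> where "\<phi> j'' = ?R * ((if j'' = j then const_poly (alpha i j') else 0) -
      (if j'' = j' then const_poly (alpha i j) else 0))" for j''
  have "\<phi> \<in> D_mod (\<lambda>P. P = 0) l n alpha m"
    unfolding \<phi>_def using \<open>i < n\<close> \<open>j < l\<close> \<open>j' < l\<close> by (rule cofactor_der_in_D_mod)
  then obtain h where h: "\<forall>j''<l. \<phi> j'' - (\<Sum>k<l. h k * \<theta> k j'') = 0"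
    using gen by blast
  have "(\<Sum>j''<l. \<phi> j'' * G j'' k) = (\<Sum>j''<l. (\<Sum>k'<l. h k' * \<theta> k' j'') * G j'' k)"
    using h by (intro sum.cong) auto
  also have "\<dots> = h k * defining_poly l n alpha m"
    by (rule sum_sum_mult_inverse[OF right \<open>k < l\<close>])
  also have "\<dots> = ?R * (lin_form l (alpha i) ^ m i * h k)"
    by (simp add: defining_poly_eq_cofactor_poly[OF \<open>i < n\<close>] ac_simps)
  finally have "(\<Sum>j''<l. \<phi> j'' * G j'' k) = ?R * (lin_form l (alpha i) ^ m i * h k)" .
  moreover have "(\<Sum>j''<l. \<phi> j'' * G j'' k) =
      (\<Sum>j''<l. (if j'' = j then ?R * (const_poly (alpha i j') * G j k) else 0) -
        (if j'' = j' then ?R * (const_poly (alpha i j) * G j' k) else 0))"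
    unfolding \<phi>_def by (intro sum.cong) (auto simp: algebra_simps)
  moreover have "\<dots> = ?R * (const_poly (alpha i j') * G j k - const_poly (alpha i j) * G j' k)"
    using assms by (simp add: sum_subtractf right_diff_distrib)
  ultimately have "const_poly (alpha i j') * G j k - const_poly (alpha i j) * G j' k =
      lin_form l (alpha i) ^ m i * h k"
    using cofactor_poly_nonzero[OF nonzero] by simp
  then show ?thesis
    by simp
qed

lemma left_inverse_if_generating:
  assumes gen: "\<forall>f\<in>D_mod (\<lambda>P. P = 0) l n alpha m.
      \<exists>g. (\<forall>k<l. in_vars l (g k)) \<and> (\<forall>j<l. f j - (\<Sum>k<l. g k * \<theta> k j) = 0)"
  obtains G where "\<forall>j<l. \<forall>k<l. in_vars l (G j k)"
    and "\<forall>j<l. \<forall>j'<l. (\<Sum>k<l. G j k * \<theta> k j') = (if j = j' then defining_poly l n alpha m else 0)"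
proof -
  let ?Q = "defining_poly l n alpha m"
  have "\<forall>j<l. \<exists>g. (\<forall>k<l. in_vars l (g k)) \<and> (\<forall>j'<l. (\<Sum>k<l. g k * \<theta> k j') = (if j = j' then ?Q else 0))"
  proof (intro allI impI)
    fix j assume "j < l"
    then have mem: "(\<lambda>j'. if j' = j then ?Q else 0) \<in> D_mod (\<lambda>P. P = 0) l n alpha m"
      by (rule defining_poly_der_in_D_mod)
    obtain g where g: "\<forall>k<l. in_vars l (g k)"
      "\<forall>j'<l. (if j' = j then ?Q else 0) - (\<Sum>k<l. g k * \<theta> k j') = 0"
      using bspec[OF gen mem] by blast
    have "(\<Sum>k<l. g k * \<theta> k j') = (if j = j' then ?Q else 0)" if "j' < l" for j'
      using g(2) that by (cases "j = j'") auto
    with g(1) show "\<exists>g. (\<forall>k<l. in_vars l (g k)) \<and>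
        (\<forall>j'<l. (\<Sum>k<l. g k * \<theta> k j') = (if j = j' then ?Q else 0))"
      by blast
  qed
  then have "\<exists>G. \<forall>j<l. (\<forall>k<l. in_vars l (G j k)) \<and>
      (\<forall>j'<l. (\<Sum>k<l. G j k * \<theta> k j') = (if j = j' then ?Q else 0))"
    by (rule iffD1[OF choice_iff'])
  then show ?thesis
    using that by blast
qed

lemma basis_certificate_if_free_mod:
  fixes alpha :: "nat \<Rightarrow> nat \<Rightarrow> 'a::idom"
  assumes nonzero: "\<forall>i<n. \<exists>j<l. alpha i j \<noteq> 0"
    and free: "free_mod (\<lambda>P. P = 0) l n alpha m e"
  obtains \<theta> G where "basis_certificate l n alpha m e 1 \<theta> G"
proof -
  let ?D = "D_mod (\<lambda>P. P = 0) l n alpha m" and ?Q = "defining_poly l n alpha m"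
  obtain \<theta> where basis: "\<forall>k<l. \<theta> k \<in> ?D \<and> (\<forall>j<l. homog (e k) (\<theta> k j))"
    and gen: "\<forall>f\<in>?D. \<exists>g. (\<forall>k<l. in_vars l (g k)) \<and> (\<forall>j<l. f j - (\<Sum>k<l. g k * \<theta> k j) = 0)"
    and indep: "\<forall>g. (\<forall>k<l. in_vars l (g k)) \<longrightarrow> (\<forall>j<l. (\<Sum>k<l. g k * \<theta> k j) = 0) \<longrightarrow> (\<forall>k<l. g k = 0)"
    using free unfolding free_mod_def by blast
  obtain G where G_vars: "\<forall>j<l. \<forall>k<l. in_vars l (G j k)"
    and left: "\<forall>j<l. \<forall>j'<l. (\<Sum>k<l. G j k * \<theta> k j') = (if j = j' then ?Q else 0)"
    using left_inverse_if_generating[OF gen] by blast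
  have der: "\<forall>k<l. is_der l (\<theta> k) \<and> (\<forall>i<n. lin_form l (alpha i) ^ m i dvd der_app l (\<theta> k) (alpha i))"
    using basis by (simp add: mem_D_mod_eq_0_iff)
  then have "\<forall>k<l. \<forall>j<l. in_vars l (\<theta> k j)"
    by (simp add: is_der_def)
  then have right: "\<forall>k<l. \<forall>k'<l. (\<Sum>j<l. \<theta> k j * G j k') = (if k = k' then ?Q else 0)"
    using right_inverse_if_left_inverse[OF indep _ G_vars in_vars_defining_poly left] by blast
  have "basis_certificate l n alpha m e 1 \<theta> G"
    unfolding basis_certificate_def const_poly_one mult_1
  proof (intro conjI left right)
    show "\<forall>k<l. is_der l (\<theta> k) \<and> (\<forall>j<l. homog (e k) (\<theta> k j))"
      using basis der by blast
    show "\<forall>k<l. \<forall>i<n. lin_form l (alpha i) ^ m i dvd der_app l (\<theta> k) (alpha i)"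
      using der by blast
    show "\<forall>i<n. \<forall>j<l. \<forall>j'<l. \<forall>k<l. lin_form l (alpha i) ^ m i dvd
        const_poly (alpha i j') * G j k - const_poly (alpha i j) * G j' k"
      using adjoint_dvd_if_generating[OF nonzero gen right] by blast
  qed
  then show ?thesis ..
qed

section \<open>Clearing denominators\<close>

lemma mpoly_of_int_der_app_scaled:
  assumes "\<And>j. j < l \<Longrightarrow> mpoly_of_int (f' j) = const_poly (of_int d) * f j"
  shows "mpoly_of_int (der_app l f' a) = const_poly (of_int d) * der_app l f (\<lambda>j. of_int (a j))"
proof -
  have "mpoly_of_int (der_app l f' a) = (\<Sum>j<l. const_poly (of_int (a j)) * (const_poly (of_int d) * f j))"
    unfolding der_app_def mpoly_of_int_sum
    by (intro sum.cong) (simp_all add: mpoly_of_int_mult mpoly_of_int_const_poly assms)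
  then show ?thesis
    by (simp add: der_app_def sum_distrib_left mult.left_commute)
qed

lemma mpoly_of_int_inverse_pair:
  fixes A B :: "nat \<Rightarrow> nat \<Rightarrow> 'a::{comm_ring_1,ring_char_0} mpoly"
  assumes inverse: "\<forall>a<l. \<forall>c<l. (\<Sum>b<l. A a b * B b c) = (if a = c then mpoly_of_int Q else 0)"
    and A': "\<And>a b. a < l \<Longrightarrow> b < l \<Longrightarrow> mpoly_of_int (A' a b) = const_poly (of_int d) * A a b"
    and B': "\<And>a b. a < l \<Longrightarrow> b < l \<Longrightarrow> mpoly_of_int (B' a b) = const_poly (of_int d) * B a b"
  shows "\<forall>a<l. \<forall>c<l. (\<Sum>b<l. A' a b * B' b c) = (if a = c then const_poly (d * d) * Q else 0)"
proof (intro allI impI)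
  fix a c assume "a < l" "c < l"
  have "(mpoly_of_int (\<Sum>b<l. A' a b * B' b c) :: 'a mpoly) =
      const_poly (of_int (d * d)) * (\<Sum>b<l. A a b * B b c)"
    using A' B' \<open>a < l\<close> \<open>c < l\<close>
    by (simp add: mpoly_of_int_sum mpoly_of_int_mult sum_distrib_left const_poly_mult ac_simps)
  also have "\<dots> = mpoly_of_int (if a = c then const_poly (d * d) * Q else 0)"
    using inverse \<open>a < l\<close> \<open>c < l\<close> by (simp add: mpoly_of_int_mult mpoly_of_int_const_poly)
  finally show "(\<Sum>b<l. A' a b * B' b c) = (if a = c then const_poly (d * d) * Q else 0)"
    by simp
qed

lemma basis_certificate_common_denominator:
  fixes alpha :: "nat \<Rightarrow> nat \<Rightarrow> int" and \<theta> G :: "nat \<Rightarrow> nat \<Rightarrow> rat mpoly"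
  assumes "basis_certificate l n (\<lambda>i j. of_int (alpha i j)) m e 1 \<theta> G"
  obtains d \<theta>' G' where "d > 0"
    and "\<And>k j. k < l \<Longrightarrow> j < l \<Longrightarrow> mpoly_of_int (\<theta>' k j) = const_poly (of_int d) * \<theta> k j"
    and "\<And>k j. l \<le> j \<Longrightarrow> \<theta>' k j = 0"
    and "\<And>j k. j < l \<Longrightarrow> k < l \<Longrightarrow> mpoly_of_int (G' j k) = const_poly (of_int d) * G j k"
    and "\<And>k i. k < l \<Longrightarrow> i < n \<Longrightarrow> lin_form l (alpha i) ^ m i dvd der_app l (\<theta>' k) (alpha i)"
    and "\<And>i j j' k. i < n \<Longrightarrow> j < l \<Longrightarrow> j' < l \<Longrightarrow> k < l \<Longrightarrow> lin_form l (alpha i) ^ m i dvd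
        const_poly (alpha i j') * G' j k - const_poly (alpha i j) * G' j' k"
proof -
  let ?\<alpha> = "\<lambda>i. lin_form l (\<lambda>j. rat_of_int (alpha i j)) ^ m i"
  have \<alpha>: "mpoly_of_int (lin_form l (alpha i) ^ m i) = ?\<alpha> i" for i
    by (simp add: mpoly_of_int_power mpoly_of_int_lin_form)
  have der_dvd: "\<forall>k<l. \<forall>i<n. ?\<alpha> i dvd der_app l (\<theta> k) (\<lambda>j. of_int (alpha i j))"
    and adjoint: "\<forall>i<n. \<forall>j<l. \<forall>j'<l. \<forall>k<l. ?\<alpha> i dvd
        const_poly (of_int (alpha i j')) * G j k - const_poly (of_int (alpha i j)) * G j' k"
    using assms unfolding basis_certificate_def by simp_all
  (* The quotients witnessing these divisibilities join the entries of theta and G in the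
     finite family whose denominators are cleared. *)
  define \<gamma> where "\<gamma> k i = (SOME g. der_app l (\<theta> k) (\<lambda>j. of_int (alpha i j)) = ?\<alpha> i * g)" for k i
  have \<gamma>: "der_app l (\<theta> k) (\<lambda>j. of_int (alpha i j)) = ?\<alpha> i * \<gamma> k i" if "k < l" "i < n" for k i
    unfolding \<gamma>_def by (rule someI_ex) (use der_dvd that in \<open>simp add: dvd_def\<close>)
  define H where "H i j j' k = (SOME h. const_poly (of_int (alpha i j')) * G j k -
      const_poly (of_int (alpha i j)) * G j' k = ?\<alpha> i * h)" for i j j' k
  have H: "const_poly (of_int (alpha i j')) * G j k - const_poly (of_int (alpha i j)) * G j' k =
      ?\<alpha> i * H i j j' k" if "i < n" "j < l" "j' < l" "k < l" for i j j' k
    unfolding H_def by (rule someI_ex) (use adjoint that in \<open>simp add: dvd_def\<close>)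
  define F where "F = (\<lambda>(k, j). \<theta> k j) ` ({..<l} \<times> {..<l}) \<union> (\<lambda>(j, k). G j k) ` ({..<l} \<times> {..<l}) \<union>
      (\<lambda>(k, i). \<gamma> k i) ` ({..<l} \<times> {..<n}) \<union>
      (\<lambda>(i, j, j', k). H i j j' k) ` ({..<n} \<times> {..<l} \<times> {..<l} \<times> {..<l})"
  have "finite F"
    by (simp add: F_def)
  then obtain d lift where "d > 0"
    and lift: "\<And>P. P \<in> F \<Longrightarrow> mpoly_of_int (lift P) = const_poly (of_int d) * P"
    using common_denominator by blast
  define \<theta>' where "\<theta>' k j = (if j < l then lift (\<theta> k j) else 0)" for k j
  define G' where "G' j k = lift (G j k)" for j k
  have \<theta>': "mpoly_of_int (\<theta>' k j) = const_poly (of_int d) * \<theta> k j" if "k < l" "j < l" for k j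
  proof -
    have "mpoly_of_int (lift (\<theta> k j)) = const_poly (of_int d) * \<theta> k j"
      using that by (intro lift) (force simp: F_def)
    then show ?thesis
      using that by (simp add: \<theta>'_def)
  qed
  have G': "mpoly_of_int (G' j k) = const_poly (of_int d) * G j k" if "j < l" "k < l" for j k
    unfolding G'_def using that by (intro lift) (force simp: F_def)
  show ?thesis
  proof (rule that[OF \<open>d > 0\<close> \<theta>' _ G'])
    show "\<theta>' k j = 0" if "l \<le> j" for k j
      using that by (simp add: \<theta>'_def)
  next
    fix k i assume "k < l" "i < n"
    show "lin_form l (alpha i) ^ m i dvd der_app l (\<theta>' k) (alpha i)"
    proof (rule dvd_if_mpoly_of_int_dvd)
      show "mpoly_of_int (der_app l (\<theta>' k) (alpha i)) =
          const_poly (of_int d) * der_app l (\<theta> k) (\<lambda>j. of_int (alpha i j))"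
        using \<theta>' \<open>k < l\<close> by (intro mpoly_of_int_der_app_scaled)
      show "mpoly_of_int (lift (\<gamma> k i)) = const_poly (of_int d) * \<gamma> k i"
        using \<open>k < l\<close> \<open>i < n\<close> by (intro lift) (force simp: F_def)
      show "der_app l (\<theta> k) (\<lambda>j. of_int (alpha i j)) = mpoly_of_int (lin_form l (alpha i) ^ m i) * \<gamma> k i"
        using \<gamma>[OF \<open>k < l\<close> \<open>i < n\<close>] by (simp only: \<alpha>)
    qed
  next
    fix i j j' k assume "i < n" "j < l" "j' < l" "k < l"
    show "lin_form l (alpha i) ^ m i dvd const_poly (alpha i j') * G' j k - const_poly (alpha i j) * G' j' k"
    proof (rule dvd_if_mpoly_of_int_dvd)
      show "mpoly_of_int (const_poly (alpha i j') * G' j k - const_poly (alpha i j) * G' j' k) =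
          const_poly (of_int d) *
            (const_poly (of_int (alpha i j')) * G j k - const_poly (of_int (alpha i j)) * G j' k)"
        using \<open>j < l\<close> \<open>j' < l\<close> \<open>k < l\<close> G'
        by (simp add: mpoly_of_int_diff mpoly_of_int_mult mpoly_of_int_const_poly algebra_simps)
      show "mpoly_of_int (lift (H i j j' k)) = const_poly (of_int d) * H i j j' k"
        using \<open>i < n\<close> \<open>j < l\<close> \<open>j' < l\<close> \<open>k < l\<close> by (intro lift) (force simp: F_def)
      show "const_poly (of_int (alpha i j')) * G j k - const_poly (of_int (alpha i j)) * G j' k =
          mpoly_of_int (lin_form l (alpha i) ^ m i) * H i j j' k"
        using H[OF \<open>i < n\<close> \<open>j < l\<close> \<open>j' < l\<close> \<open>k < l\<close>] by (simp only: \<alpha>)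
    qed
  qed
qed

lemma basis_certificate_int_if_rat:
  fixes alpha :: "nat \<Rightarrow> nat \<Rightarrow> int" and \<theta> G :: "nat \<Rightarrow> nat \<Rightarrow> rat mpoly"
  assumes cert: "basis_certificate l n (\<lambda>i j. of_int (alpha i j)) m e 1 \<theta> G"
  obtains c \<theta>' G' where "c \<noteq> 0" "basis_certificate l n alpha m e c \<theta>' G'"
proof -
  obtain d \<theta>' G' where "d > 0"
    and \<theta>': "\<And>k j. k < l \<Longrightarrow> j < l \<Longrightarrow> mpoly_of_int (\<theta>' k j) = const_poly (of_int d) * \<theta> k j"
    and \<theta>'_zero: "\<And>k j. l \<le> j \<Longrightarrow> \<theta>' k j = 0"
    and G': "\<And>j k. j < l \<Longrightarrow> k < l \<Longrightarrow> mpoly_of_int (G' j k) = const_poly (of_int d) * G j k"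
    and der_dvd: "\<And>k i. k < l \<Longrightarrow> i < n \<Longrightarrow> lin_form l (alpha i) ^ m i dvd der_app l (\<theta>' k) (alpha i)"
    and adjoint: "\<And>i j j' k. i < n \<Longrightarrow> j < l \<Longrightarrow> j' < l \<Longrightarrow> k < l \<Longrightarrow> lin_form l (alpha i) ^ m i dvd
        const_poly (alpha i j') * G' j k - const_poly (alpha i j) * G' j' k"
    using basis_certificate_common_denominator[OF cert] by blast
  have der: "\<forall>k<l. is_der l (\<theta> k) \<and> (\<forall>j<l. homog (e k) (\<theta> k j))"
    and left: "\<forall>j<l. \<forall>j'<l. (\<Sum>k<l. G j k * \<theta> k j') =
      (if j = j' then mpoly_of_int (defining_poly l n alpha m) else 0)"
    and right: "\<forall>k<l. \<forall>k'<l. (\<Sum>j<l. \<theta> k j * G j k') =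
      (if k = k' then mpoly_of_int (defining_poly l n alpha m) else 0)"
    using cert unfolding basis_certificate_def mpoly_of_int_defining_poly by simp_all
  have keys: "Poly_Mapping.keys (\<theta>' k j) = Poly_Mapping.keys (\<theta> k j)" if "k < l" "j < l" for k j
    using arg_cong[OF \<theta>'[OF that], of Poly_Mapping.keys] \<open>d > 0\<close> by (simp add: keys_const_poly_mult)
  have "is_der l (\<theta>' k) \<and> (\<forall>j<l. homog (e k) (\<theta>' k j))" if "k < l" for k
  proof (intro conjI allI impI)
    have "in_vars l (\<theta>' k j)" if "j < l" for j
      using der \<open>k < l\<close> that unfolding is_der_def in_vars_def keys[OF \<open>k < l\<close> that] by blast
    then show "is_der l (\<theta>' k)"
      using \<theta>'_zero by (simp add: is_der_def)
    show "homog (e k) (\<theta>' k j)" if "j < l" for j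
      using der \<open>k < l\<close> that unfolding homog_def keys[OF \<open>k < l\<close> that] by blast
  qed
  then have "basis_certificate l n alpha m e (d * d) \<theta>' G'"
    unfolding basis_certificate_def
  proof (intro conjI)
    show "\<forall>j<l. \<forall>j'<l. (\<Sum>k<l. G' j k * \<theta>' k j') =
        (if j = j' then const_poly (d * d) * defining_poly l n alpha m else 0)"
      by (rule mpoly_of_int_inverse_pair[OF left G' \<theta>'])
    show "\<forall>k<l. \<forall>k'<l. (\<Sum>j<l. \<theta>' k j * G' j k') =
        (if k = k' then const_poly (d * d) * defining_poly l n alpha m else 0)"
      by (rule mpoly_of_int_inverse_pair[OF right \<theta>' G'])
  qed (use der_dvd adjoint in blast)+
  moreover have "d * d \<noteq> 0"
    using \<open>d > 0\<close> by simp
  ultimately show ?thesis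
    using that by blast
qed

lemma basis_certificate_int_if_free_multiarr:
  fixes alpha :: "nat \<Rightarrow> nat \<Rightarrow> int"
  assumes "\<forall>i<n. \<exists>j<l. alpha i j \<noteq> 0" and "free_multiarr l n (\<lambda>i j. rat_of_int (alpha i j)) m e"
  obtains c \<theta> G where "c \<noteq> 0" "basis_certificate l n alpha m e c \<theta> G"
proof -
  have "\<forall>i<n. \<exists>j<l. rat_of_int (alpha i j) \<noteq> 0"
    using assms(1) by simp
  then obtain \<theta> G where "basis_certificate l n (\<lambda>i j. rat_of_int (alpha i j)) m e 1 \<theta> G"
    using assms(2) unfolding free_multiarr_def by (rule basis_certificate_if_free_mod)
  then show ?thesis
    using that by (rule basis_certificate_int_if_rat)
qed

section \<open>Reducing a certificate modulo a prime\<close>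

lemma dvd_mod_lin_form_power_sum:
  fixes alpha :: "nat \<Rightarrow> nat \<Rightarrow> int"
  assumes p: "prime p" and "i < n" "k < l" and jj: "jj < l" "\<not> int p dvd alpha i jj"
    and adjoint: "\<forall>j<l. lin_form l (alpha i) ^ m i dvd
      const_poly (alpha i jj) * G j k - const_poly (alpha i j) * G jj k"
    and f: "f \<in> D_mod (zero_mod p) l n alpha m"
  shows "dvd_mod (const_poly (int p)) (lin_form l (alpha i) ^ m i) (\<Sum>j<l. f j * G j k)"
proof -
  let ?\<pi> = "const_poly (int p) :: int mpoly" and ?a = "lin_form l (alpha i) ^ m i"
    and ?u = "\<Sum>j<l. f j * G j k"
  obtain s where s: "?\<pi> dvd der_app l f (alpha i) - ?a * s"
    using f \<open>i < n\<close> by (auto simp: D_mod_def zero_mod_iff_dvd)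
  have "const_poly (alpha i jj) * ?u - der_app l f (alpha i) * G jj k =
      (\<Sum>j<l. f j * (const_poly (alpha i jj) * G j k - const_poly (alpha i j) * G jj k))"
    by (simp add: der_app_def sum_distrib_left sum_distrib_right right_diff_distrib sum_subtractf ac_simps)
  also have "?a dvd \<dots>"
    using adjoint by (intro dvd_sum dvd_mult) auto
  finally obtain w where w: "const_poly (alpha i jj) * ?u - der_app l f (alpha i) * G jj k = ?a * w"
    by (rule dvdE)
  have "const_poly (alpha i jj) * ?u - ?a * (s * G jj k + w) = (der_app l f (alpha i) - ?a * s) * G jj k"
    using w by (simp add: algebra_simps)
  also have "?\<pi> dvd \<dots>"
    using s by (rule dvd_mult2)
  finally have "dvd_mod ?\<pi> ?a (const_poly (alpha i jj) * ?u)"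
    by (rule dvd_modI)
  moreover obtain c' where "?\<pi> dvd const_poly (alpha i jj) * const_poly c' - 1"
    using inverse_mod_prime[OF p jj(2)] .
  ultimately show ?thesis
    using dvd_mod_cancel_unit by blast
qed

lemma dvd_mod_defining_poly_sum:
  fixes alpha :: "nat \<Rightarrow> nat \<Rightarrow> int"
  assumes p: "prime p" and nonzero: "\<forall>i<n. \<exists>j<l. \<not> int p dvd alpha i j"
    and distinct: "\<forall>i<n. \<forall>i'<n. i \<noteq> i' \<longrightarrow> \<not> proportional_mod p l (alpha i) (alpha i')"
    and adjoint: "\<forall>i<n. \<forall>j<l. \<forall>j'<l. \<forall>k<l. lin_form l (alpha i) ^ m i dvd
        const_poly (alpha i j') * G j k - const_poly (alpha i j) * G j' k"
    and f: "f \<in> D_mod (zero_mod p) l n alpha m" and "k < l"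
  shows "dvd_mod (const_poly (int p)) (defining_poly l n alpha m) (\<Sum>j<l. f j * G j k)"
  unfolding defining_poly_def
proof (rule dvd_mod_prod_powers[OF prime_elem_const_poly[OF p]])
  fix i assume "i \<in> {..<n}"
  then obtain jj where jj: "jj < l" "\<not> int p dvd alpha i jj"
    using nonzero by blast
  show "prime_mod (const_poly (int p)) (lin_form l (alpha i))"
    using prime_mod_lin_form[where b = "alpha i", OF p jj] .
  show "dvd_mod (const_poly (int p)) (lin_form l (alpha i) ^ m i) (\<Sum>j<l. f j * G j k)"
    using \<open>i \<in> {..<n}\<close> \<open>k < l\<close> adjoint jj(1) f
    by (intro dvd_mod_lin_form_power_sum[where alpha = alpha, OF p _ _ jj]) auto
next
  fix i i' assume "i \<in> {..<n}" "i' \<in> {..<n}" "i \<noteq> i'"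
  then show "\<not> dvd_mod (const_poly (int p)) (lin_form l (alpha i)) (lin_form l (alpha i'))"
    using distinct proportional_mod_if_dvd_mod_lin_form by blast
qed simp

lemma not_dvd_defining_poly:
  fixes alpha :: "nat \<Rightarrow> nat \<Rightarrow> int"
  assumes p: "prime p" and nonzero: "\<forall>i<n. \<exists>j<l. \<not> int p dvd alpha i j"
  shows "\<not> const_poly (int p) dvd defining_poly l n alpha m"
proof -
  have "\<not> const_poly (int p) dvd lin_form l (alpha i)" if "i < n" for i
    using nonzero prime_mod_lin_form[OF p] that by (meson prime_mod_def)
  then show ?thesis
    unfolding defining_poly_def
    by (intro prime_elem_not_dvd_prod[OF prime_elem_const_poly[OF p]])
      (auto dest: prime_elem_dvd_power[OF prime_elem_const_poly[OF p]])
qed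

lemma prime_elem_dvd_coordinates:
  fixes \<theta> G :: "nat \<Rightarrow> nat \<Rightarrow> 'a::comm_ring_1"
  assumes \<pi>: "prime_elem \<pi>" and Q: "\<not> \<pi> dvd Q"
    and left: "\<forall>j<l. \<forall>j'<l. (\<Sum>k<l. G j k * \<theta> k j') = (if j = j' then C * Q else 0)"
    and w: "\<forall>k<l. \<pi> dvd (\<Sum>j<l. f j * G j k) - Q * w k" and "j < l"
  shows "\<pi> dvd C * f j - (\<Sum>k<l. w k * \<theta> k j)"
proof -
  have "(\<Sum>k<l. (\<Sum>j'<l. f j' * G j' k) * \<theta> k j) = f j * (C * Q)"
    by (rule sum_sum_mult_inverse[OF left \<open>j < l\<close>])
  then have "Q * (C * f j - (\<Sum>k<l. w k * \<theta> k j)) = (\<Sum>k<l. ((\<Sum>j'<l. f j' * G j' k) - Q * w k) * \<theta> k j)"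
    by (simp add: algebra_simps sum_subtractf sum_distrib_left)
  also have "\<pi> dvd \<dots>"
    using w by (intro dvd_sum dvd_mult2) auto
  finally show ?thesis
    using \<pi> Q by (simp add: prime_elem_dvd_mult_iff)
qed

lemma basis_certificate_generates_mod:
  fixes alpha :: "nat \<Rightarrow> nat \<Rightarrow> int"
  assumes p: "prime p" and c: "\<not> int p dvd c"
    and nonzero: "\<forall>i<n. \<exists>j<l. \<not> int p dvd alpha i j"
    and distinct: "\<forall>i<n. \<forall>i'<n. i \<noteq> i' \<longrightarrow> \<not> proportional_mod p l (alpha i) (alpha i')"
    and cert: "basis_certificate l n alpha m e c \<theta> G"
    and f: "f \<in> D_mod (zero_mod p) l n alpha m"
  shows "\<exists>g. (\<forall>k<l. in_vars l (g k)) \<and> (\<forall>j<l. zero_mod p (f j - (\<Sum>k<l. g k * \<theta> k j)))"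
proof -
  let ?\<pi> = "const_poly (int p) :: int mpoly" and ?Q = "defining_poly l n alpha m"
  have der: "\<forall>k<l. is_der l (\<theta> k)"
    and left: "\<forall>j<l. \<forall>j'<l. (\<Sum>k<l. G j k * \<theta> k j') = (if j = j' then const_poly c * ?Q else 0)"
    and adjoint: "\<forall>i<n. \<forall>j<l. \<forall>j'<l. \<forall>k<l. lin_form l (alpha i) ^ m i dvd
        const_poly (alpha i j') * G j k - const_poly (alpha i j) * G j' k"
    using cert unfolding basis_certificate_def by simp_all
  have "\<forall>k<l. \<exists>w. ?\<pi> dvd (\<Sum>j<l. f j * G j k) - ?Q * w"
    using dvd_mod_defining_poly_sum[OF p nonzero distinct adjoint f] by (simp add: dvd_mod_def)
  then obtain w where w: "\<forall>k<l. ?\<pi> dvd (\<Sum>j<l. f j * G j k) - ?Q * w k"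
    by (rule iffD1[OF choice_iff', THEN exE])
  obtain c' where c': "?\<pi> dvd const_poly c * const_poly c' - 1"
    using inverse_mod_prime[OF p c] .
  define g where "g k = restrict_vars l (const_poly c' * w k)" for k
  have "zero_mod p (f j - (\<Sum>k<l. g k * \<theta> k j))" if "j < l" for j
  proof -
    have "?\<pi> dvd const_poly c * f j - (\<Sum>k<l. w k * \<theta> k j)"
      using prime_elem_dvd_coordinates[OF prime_elem_const_poly[OF p] not_dvd_defining_poly[OF p nonzero]
          left w that] .
    then have "?\<pi> dvd const_poly c' * (const_poly c * f j - (\<Sum>k<l. w k * \<theta> k j)) -
        (const_poly c * const_poly c' - 1) * f j"
      using c' by (blast intro: dvd_diff dvd_mult dvd_mult2)
    also have "\<dots> = f j - (\<Sum>k<l. const_poly c' * w k * \<theta> k j)"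
      by (simp add: algebra_simps sum_distrib_left)
    finally have "?\<pi> dvd restrict_vars l (f j - (\<Sum>k<l. const_poly c' * w k * \<theta> k j))"
      by (rule const_poly_dvd_restrict_vars)
    also have "restrict_vars l (f j - (\<Sum>k<l. const_poly c' * w k * \<theta> k j)) = f j - (\<Sum>k<l. g k * \<theta> k j)"
      using der f \<open>j < l\<close>
      by (simp add: g_def restrict_vars_diff restrict_vars_sum restrict_vars_mult is_der_def
          D_mod_def in_vars_iff_restrict_vars)
    finally show ?thesis
      by (simp add: zero_mod_iff_dvd)
  qed
  moreover have "\<forall>k<l. in_vars l (g k)"
    by (simp add: g_def in_vars_restrict_vars)
  ultimately show ?thesis
    by blast
qed

lemma basis_certificate_independent_mod:
  fixes alpha :: "nat \<Rightarrow> nat \<Rightarrow> int"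
  assumes p: "prime p" and c: "\<not> int p dvd c"
    and nonzero: "\<forall>i<n. \<exists>j<l. \<not> int p dvd alpha i j"
    and cert: "basis_certificate l n alpha m e c \<theta> G"
    and g: "\<forall>j<l. zero_mod p (\<Sum>k<l. g k * \<theta> k j)" and "k' < l"
  shows "zero_mod p (g k')"
proof -
  let ?\<pi> = "const_poly (int p) :: int mpoly" and ?Q = "defining_poly l n alpha m"
  have right: "\<forall>k<l. \<forall>k'<l. (\<Sum>j<l. \<theta> k j * G j k') = (if k = k' then const_poly c * ?Q else 0)"
    using cert unfolding basis_certificate_def by simp
  have "(\<Sum>j<l. (\<Sum>k<l. g k * \<theta> k j) * G j k') = g k' * (const_poly c * ?Q)"
    by (rule sum_sum_mult_inverse[OF right \<open>k' < l\<close>])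
  moreover have "?\<pi> dvd (\<Sum>j<l. (\<Sum>k<l. g k * \<theta> k j) * G j k')"
    by (rule dvd_sum, rule dvd_mult2) (use g in \<open>simp add: zero_mod_iff_dvd\<close>)
  ultimately have "?\<pi> dvd g k' * (const_poly c * ?Q)"
    by simp
  moreover have "\<not> ?\<pi> dvd const_poly c"
    using c by (simp add: const_poly_dvd_const_poly_iff)
  ultimately show ?thesis
    using not_dvd_defining_poly[OF p nonzero] prime_elem_const_poly[OF p]
    by (simp add: zero_mod_iff_dvd prime_elem_dvd_mult_iff)
qed

lemma free_multiarr_modp_if_basis_certificate:
  fixes alpha :: "nat \<Rightarrow> nat \<Rightarrow> int"
  assumes p: "prime p" and c: "\<not> int p dvd c"
    and nonzero: "\<forall>i<n. \<exists>j<l. \<not> int p dvd alpha i j"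
    and distinct: "\<forall>i<n. \<forall>i'<n. i \<noteq> i' \<longrightarrow> \<not> proportional_mod p l (alpha i) (alpha i')"
    and cert: "basis_certificate l n alpha m e c \<theta> G"
  shows "free_multiarr_modp p l n alpha m e"
  unfolding free_multiarr_modp_def free_mod_def
proof (intro exI[of _ \<theta>] conjI ballI allI impI)
  fix k assume "k < l"
  then show "\<theta> k \<in> D_mod (zero_mod p) l n alpha m" "homog (e k) (\<theta> k j)" if "j < l" for j
    using cert that by (auto simp: basis_certificate_def zero_mod_def intro!: mem_D_mod_if_dvd)
next
  fix f assume "f \<in> D_mod (zero_mod p) l n alpha m"
  then show "\<exists>g. (\<forall>k<l. in_vars l (g k)) \<and> (\<forall>j<l. zero_mod p (f j - (\<Sum>k<l. g k * \<theta> k j)))"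
    by (rule basis_certificate_generates_mod[OF p c nonzero distinct cert])
next
  fix g k assume "\<forall>j<l. zero_mod p (\<Sum>k<l. g k * \<theta> k j)" "k < l"
  then show "zero_mod p (g k)"
    by (rule basis_certificate_independent_mod[OF p c nonzero cert])
qed

section \<open>All but finitely many primes\<close>

lemma eventually_not_dvd: "x \<noteq> 0 \<Longrightarrow> eventually (\<lambda>p. \<not> int p dvd x) sequentially"
  using eventually_gt_at_top[of "nat \<bar>x\<bar>"]
  by (rule eventually_mono) (auto dest: dvd_imp_le_int)

lemma eventually_not_proportional_mod:
  fixes a b :: "nat \<Rightarrow> int"
  assumes "j2 < l" "b j2 \<noteq> 0" and not_multiple: "\<not> (\<exists>c::rat. \<forall>j<l. of_int (a j) = c * of_int (b j))"
  shows "eventually (\<lambda>p. \<not> proportional_mod p l a b) sequentially"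
proof -
  obtain j1 where "j1 < l" "rat_of_int (a j1) \<noteq> of_int (a j2) / of_int (b j2) * of_int (b j1)"
    using not_multiple by blast
  define M where "M = a j1 * b j2 - a j2 * b j1"
  have "M \<noteq> 0"
    using \<open>j1 < l\<close> \<open>b j2 \<noteq> 0\<close> \<open>of_int (a j1) \<noteq> _\<close> unfolding M_def
    by (auto simp: field_simps simp flip: of_int_mult)
  have "\<not> proportional_mod p l a b" if "\<not> int p dvd M" for p
  proof
    assume "proportional_mod p l a b"
    then obtain c where c: "\<forall>j<l. int p dvd a j - c * b j"
      by (auto simp: proportional_mod_def)
    have "M = (a j1 - c * b j1) * b j2 - (a j2 - c * b j2) * b j1"
      by (simp add: M_def algebra_simps)
    also have "int p dvd \<dots>"
      using c \<open>j1 < l\<close> \<open>j2 < l\<close> by (simp add: dvd_diff)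
    finally show False
      using that by simp
  qed
  then show ?thesis
    using eventually_not_dvd[OF \<open>M \<noteq> 0\<close>] by (rule eventually_mono[rotated])
qed

lemma eventually_pairwise_not_proportional_mod:
  fixes alpha :: "nat \<Rightarrow> nat \<Rightarrow> int"
  assumes nonzero: "\<forall>i<n. \<exists>j<l. alpha i j \<noteq> 0"
    and distinct: "\<forall>i<n. \<forall>i'<n. i \<noteq> i' \<longrightarrow>
      \<not> (\<exists>c::rat. \<forall>j<l. of_int (alpha i j) = c * of_int (alpha i' j))"
  shows "eventually (\<lambda>p. \<forall>i<n. \<forall>i'<n. i \<noteq> i' \<longrightarrow> \<not> proportional_mod p l (alpha i) (alpha i'))
    sequentially"
proof -
  have "eventually (\<lambda>p. i \<noteq> i' \<longrightarrow> \<not> proportional_mod p l (alpha i) (alpha i')) sequentially"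
    if "i < n" "i' < n" for i i'
  proof (cases "i = i'")
    case False
    obtain j where "j < l" "alpha i' j \<noteq> 0"
      using nonzero \<open>i' < n\<close> by blast
    then have "eventually (\<lambda>p. \<not> proportional_mod p l (alpha i) (alpha i')) sequentially"
      by (rule eventually_not_proportional_mod) (use distinct that False in blast)
    then show ?thesis
      by (rule eventually_mono) simp
  qed simp
  then have "eventually (\<lambda>p. \<forall>i\<in>{..<n}. \<forall>i'\<in>{..<n}.
      i \<noteq> i' \<longrightarrow> \<not> proportional_mod p l (alpha i) (alpha i')) sequentially"
    by (simp add: eventually_ball_finite_distrib)
  then show ?thesis
    by (rule eventually_mono) simp
qed

lemma good_prime_if_not_proportional_mod:
  assumes "\<forall>i<n. \<forall>i'<n. i \<noteq> i' \<longrightarrow> \<not> proportional_mod p l (alpha i) (alpha i')"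
  shows "good_prime p l n alpha"
  using assms unfolding good_prime_def proportional_mod_def by (metis mult_1)

theorem corollary3p4:
  fixes l n :: nat
    and alpha :: "nat \<Rightarrow> nat \<Rightarrow> int"
    and m e :: "nat \<Rightarrow> nat"
  assumes primitive: "\<forall>i<n. \<forall>q::nat. prime q \<longrightarrow> \<not> (\<forall>j<l. int q dvd alpha i j)"
    and distinct_hyps: "\<forall>i<n. \<forall>i'<n. i \<noteq> i' \<longrightarrow>
           \<not> (\<exists>c::rat. \<forall>j<l. of_int (alpha i j) = c * of_int (alpha i' j))"
    and free_Q: "free_multiarr l n (\<lambda>i j. (of_int (alpha i j) :: rat)) m e"
  shows "\<exists>N. \<forall>p::nat. prime p \<and> p > N \<longrightarrow>
           good_prime p l n alpha \<and> free_multiarr_modp p l n alpha m e"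
proof -
  have nonzero: "\<forall>i<n. \<exists>j<l. alpha i j \<noteq> 0"
    using primitive two_is_prime_nat by fastforce
  then obtain c \<theta> G where "c \<noteq> 0" and cert: "basis_certificate l n alpha m e c \<theta> G"
    using free_Q by (rule basis_certificate_int_if_free_multiarr)
  have "eventually (\<lambda>p. \<not> int p dvd c \<and>
      (\<forall>i<n. \<forall>i'<n. i \<noteq> i' \<longrightarrow> \<not> proportional_mod p l (alpha i) (alpha i'))) sequentially"
    using eventually_not_dvd[OF \<open>c \<noteq> 0\<close>] eventually_pairwise_not_proportional_mod[OF nonzero distinct_hyps]
    by (rule eventually_conj)
  then obtain N where N: "\<And>p. p \<ge> N \<Longrightarrow> \<not> int p dvd c \<and>
      (\<forall>i<n. \<forall>i'<n. i \<noteq> i' \<longrightarrow> \<not> proportional_mod p l (alpha i) (alpha i'))"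
    unfolding eventually_sequentially by blast
  show ?thesis
  proof (intro exI allI impI conjI)
    fix p :: nat assume "prime p \<and> N < p"
    then have p: "prime p" and "\<not> int p dvd c"
      and distinct: "\<forall>i<n. \<forall>i'<n. i \<noteq> i' \<longrightarrow> \<not> proportional_mod p l (alpha i) (alpha i')"
      using N by auto
    from distinct show "good_prime p l n alpha"
      by (rule good_prime_if_not_proportional_mod)
    have "\<forall>i<n. \<exists>j<l. \<not> int p dvd alpha i j"
      using primitive p by blast
    from p \<open>\<not> int p dvd c\<close> this distinct cert show "free_multiarr_modp p l n alpha m e"
      by (rule free_multiarr_modp_if_basis_certificate)
  qed
qed

end
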